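(* There is a quantum procedure which, given oracle access to $U\in\mathcal{U}_N$ (and its inverse), a set $S\subseteq[n]$ and $\delta\in(0,1]$, outputs a bit and makes $O(1/\sqrt{\delta})$ queries to $U$, such that: if $\mathrm{Inf}_S[U]\ge\delta$ it outputs $1$ with probability at least $9/10$, and if $\mathrm{Inf}_S[U]=0$ it always outputs $0$.
   Context: $N=2^n$, $\mathcal{U}_N$ is the set of $N\times N$ unitaries. For $x\in\mathbb{Z}_4^n$, $\sigma_x=\sigma_{x_1}\otimes\cdots\otimes\sigma_{x_n}$ with $\sigma_0=I,\sigma_1=X,\sigma_2=Y,\sigma_3=Z$, and $\mathrm{supp}(x)=\{i:x_i\ne0\}$. Writing $U=\sum_{x\in\mathbb{Z}_4^n}\widehat{U}(x)\sigma_x$, the influence of $S\subseteq[n]$ on $U$ is $\mathrm{Inf}_S[U]=\sum_{x:\,\mathrm{supp}(x)\cap S\ne\emptyset}|\widehat{U}(x)|^2$. *)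

theory Defs
  imports Complex_Main "Jordan_Normal_Form.Matrix"
begin

definition pauli1 :: "nat \<Rightarrow> complex mat" where
  "pauli1 a = (if a = 1 then mat_of_rows_list 2 [[0, 1], [1, 0]]
     else if a = 2 then mat_of_rows_list 2 [[0, - \<i>], [\<i>, 0]]
     else if a = 3 then mat_of_rows_list 2 [[1, 0], [0, -1]]
     else 1\<^sub>m 2)"

text \<open>Bit of basis index i belonging to qubit k (0-based, k < n); qubit k is the
  k-th tensor factor, i.e. the (n-1-k)-th least significant bit (big-endian).\<close>
definition qbit :: "nat \<Rightarrow> nat \<Rightarrow> nat \<Rightarrow> nat" where
  "qbit n i k = (i div 2 ^ (n - 1 - k)) mod 2"

definition pauli_idx :: "nat \<Rightarrow> nat list set" where
  "pauli_idx n = {x. length x = n \<and> set x \<subseteq> {0..<4}}"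

text \<open>sigma_x = sigma_{x_1} \<otimes> ... \<otimes> sigma_{x_n}\<close>
definition pauli_string :: "nat \<Rightarrow> nat list \<Rightarrow> complex mat" where
  "pauli_string n x = mat (2 ^ n) (2 ^ n)
     (\<lambda>(i, j). \<Prod>k<n. pauli1 (x ! k) $$ (qbit n i k, qbit n j k))"

text \<open>Pauli (Fourier) coefficient: U = sum_x coeff(x) sigma_x, obtained via the
  Hilbert-Schmidt inner product: coeff(x) = tr(sigma_x^dagger U) / 2^n.\<close>
definition pauli_coeff :: "nat \<Rightarrow> complex mat \<Rightarrow> nat list \<Rightarrow> complex" where
  "pauli_coeff n U x = (\<Sum>i<2^n. \<Sum>j<2^n. cnj (pauli_string n x $$ (i, j)) * U $$ (i, j)) / 2 ^ n"

definition supp :: "nat list \<Rightarrow> nat set" where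
  "supp x = {i. i < length x \<and> x ! i \<noteq> 0}"

definition influence :: "nat \<Rightarrow> nat set \<Rightarrow> complex mat \<Rightarrow> real" where
  "influence n S U = (\<Sum>x\<in>{x\<in>pauli_idx n. supp x \<inter> S \<noteq> {}}. (cmod (pauli_coeff n U x))\<^sup>2)"

definition adj :: "complex mat \<Rightarrow> complex mat" where
  "adj A = mat (dim_col A) (dim_row A) (\<lambda>(i, j). cnj (A $$ (j, i)))"

definition unitary_mat :: "nat \<Rightarrow> complex mat \<Rightarrow> bool" where
  "unitary_mat d A \<longleftrightarrow> A \<in> carrier_mat d d \<and> adj A * A = 1\<^sub>m d"

text \<open>A query algorithm acting on n system qubits plus anc ancilla qubits
  (Hilbert space of dimension 2^n * 2^anc, system register = first tensor factor).
  Starting from basis state |0>, it applies gate 0, then for t = 0..nq-1 the query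
  (U or U^dagger = U^{-1} according to inv_q t, tensored with identity on the
  ancillas) followed by gate (t+1); finally it measures in the computational
  basis and outputs 1 iff the outcome lies in accept.  Gates are arbitrary
  unitaries independent of U.\<close>
record qalg =
  anc :: nat
  nq :: nat
  gate :: "nat \<Rightarrow> complex mat"
  inv_q :: "nat \<Rightarrow> bool"
  accept :: "nat set"

definition alg_dim :: "nat \<Rightarrow> qalg \<Rightarrow> nat" where
  "alg_dim n A = 2 ^ n * 2 ^ anc A"

definition valid_alg :: "nat \<Rightarrow> qalg \<Rightarrow> bool" where
  "valid_alg n A \<longleftrightarrow> (\<forall>t\<le>nq A. unitary_mat (alg_dim n A) (gate A t))"

definition tensor_id :: "nat \<Rightarrow> complex mat \<Rightarrow> complex mat" where
  "tensor_id m U = mat (dim_row U * 2 ^ m) (dim_col U * 2 ^ m)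
     (\<lambda>(i, j). if i mod 2 ^ m = j mod 2 ^ m then U $$ (i div 2 ^ m, j div 2 ^ m) else 0)"

definition query_op :: "qalg \<Rightarrow> complex mat \<Rightarrow> nat \<Rightarrow> complex mat" where
  "query_op A U t = tensor_id (anc A) (if inv_q A t then adj U else U)"

fun alg_state :: "nat \<Rightarrow> qalg \<Rightarrow> complex mat \<Rightarrow> nat \<Rightarrow> complex vec" where
  "alg_state n A U 0 = gate A 0 *\<^sub>v unit_vec (alg_dim n A) 0"
| "alg_state n A U (Suc t) = gate A (Suc t) *\<^sub>v (query_op A U t *\<^sub>v alg_state n A U t)"

definition prob_one :: "nat \<Rightarrow> qalg \<Rightarrow> complex mat \<Rightarrow> real" where
  "prob_one n A U = (\<Sum>k\<in>accept A \<inter> {..<alg_dim n A}. (cmod (alg_state n A U (nq A) $ k))\<^sup>2)"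

end

theory Submission
  imports Defs "Jordan_Normal_Form.Determinant"
begin

text \<open>The Pauli coefficients of \<open>U\<close> are the coordinates of its Choi state
  \<open>s = (U \<otimes> I) \<Phi>\<close> (\<open>\<Phi>\<close> maximally entangled) in the orthonormal basis of vectorised Pauli
  strings, so \<open>Inf\<^sub>S[U] = \<parallel>P s\<parallel>\<^sup>2\<close> for the projection \<open>P\<close> onto the strings meeting \<open>S\<close>.
  Since \<open>U \<otimes> I\<close> can be queried, \<open>s\<close> can be prepared and reflected about, so amplitude
  amplification applies: on the plane spanned by \<open>P s\<close> and \<open>s - P s\<close> the Grover iterate acts
  through Chebyshev polynomials in \<open>t = 2 Inf\<^sub>S[U] - 1\<close>.  Running it \<open>2\<^sup>J\<^sup>+\<^sup>1 - 1\<close> times and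
  coherently recording, at each power of two, whether the state is marked, the never-flagged part
  has squared norm \<open>(1 - \<lambda>) \<Prod>\<^sub>j\<^sub>\<le>\<^sub>J T\<^bsub>2\<^sup>j\<^esub>(t)\<^sup>2\<close>, which by the double-angle formula is at
  most \<open>1 / (4\<^sup>J\<^sup>+\<^sup>2 \<lambda>)\<close>.  Choosing \<open>4\<^sup>J\<^sup>+\<^sup>2 \<delta> \<in> [10, 40]\<close> gives acceptance probability at least
  \<open>9/10\<close> with \<open>O(1/\<surd>\<delta>)\<close> queries; if \<open>Inf\<^sub>S[U] = 0\<close> the marked component is never
  created and no flag is ever raised.\<close>

section \<open>Inner products, adjoints and unitary matrices\<close>

definition cinner :: "complex vec \<Rightarrow> complex vec \<Rightarrow> complex" where
  "cinner u v = (\<Sum>i<dim_vec v. cnj (u $ i) * v $ i)"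

definition sq_norm_vec :: "complex vec \<Rightarrow> real" where
  "sq_norm_vec v = (\<Sum>i<dim_vec v. (cmod (v $ i))\<^sup>2)"

lemma cinner_self: "cinner v v = of_real (sq_norm_vec v)"
  unfolding cinner_def sq_norm_vec_def of_real_sum
  by (intro sum.cong refl) (metis complex_norm_square mult.commute)

lemma sq_norm_vec_nonneg: "sq_norm_vec v \<ge> 0"
  unfolding sq_norm_vec_def by (intro sum_nonneg) auto

lemma sq_norm_vec_eq_0: "sq_norm_vec v = 0 \<Longrightarrow> v = 0\<^sub>v (dim_vec v)"
  unfolding sq_norm_vec_def by (intro eq_vecI) (auto simp: sum_nonneg_eq_0_iff)

lemma sq_norm_vec_smult: "sq_norm_vec (c \<cdot>\<^sub>v v) = (cmod c)\<^sup>2 * sq_norm_vec v"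
  unfolding sq_norm_vec_def by (simp add: sum_distrib_left norm_mult power_mult_distrib)

lemma sq_norm_vec_unit_vec: assumes "i < d" shows "sq_norm_vec (unit_vec d i) = 1"
proof -
  have "(cmod (unit_vec d i $ j))\<^sup>2 = (if j = i then 1 else 0)" if "j < d" for j
    using that by (simp add: unit_vec_def)
  then show ?thesis unfolding sq_norm_vec_def using assms by simp
qed

lemma cinner_unit_vec:
  assumes "v \<in> carrier_vec d" "i < d" shows "cinner (unit_vec d i) v = v $ i"
proof -
  have "cnj (unit_vec d i $ j) * v $ j = (if j = i then v $ j else 0)" if "j < d" for j
    using that by (simp add: unit_vec_def)
  then show ?thesis unfolding cinner_def using assms by simp
qed

lemma cinner_commute: "dim_vec u = dim_vec v \<Longrightarrow> cinner u v = cnj (cinner v u)"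
  unfolding cinner_def by (simp add: cnj_sum mult.commute)

lemma cinner_diff_left:
  "u \<in> carrier_vec d \<Longrightarrow> w \<in> carrier_vec d \<Longrightarrow> v \<in> carrier_vec d \<Longrightarrow>
   cinner (u - w) v = cinner u v - cinner w v"
  unfolding cinner_def by (simp add: left_diff_distrib sum_subtractf)

lemma cinner_diff_right:
  "v \<in> carrier_vec d \<Longrightarrow> w \<in> carrier_vec d \<Longrightarrow> cinner u (v - w) = cinner u v - cinner u w"
  unfolding cinner_def by (simp add: right_diff_distrib sum_subtractf)

lemma cinner_smult_right: "cinner u (c \<cdot>\<^sub>v v) = c * cinner u v"
  unfolding cinner_def by (simp add: sum_distrib_left mult.left_commute)

lemma cinner_smult_left: "dim_vec u = dim_vec v \<Longrightarrow> cinner (c \<cdot>\<^sub>v u) v = cnj c * cinner u v"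
  unfolding cinner_def by (simp add: sum_distrib_left mult.assoc)

lemma cinner_uminus_right: "cinner u (- v) = - cinner u v"
  unfolding cinner_def by (simp add: sum_negf)

lemma cinner_zero_right: "cinner u (0\<^sub>v d) = 0"
  unfolding cinner_def by simp

lemma index_mult_mat_vec_sum:
  "A \<in> carrier_mat r c \<Longrightarrow> v \<in> carrier_vec c \<Longrightarrow> i < r \<Longrightarrow> (A *\<^sub>v v) $ i = (\<Sum>j<c. A $$ (i, j) * v $ j)"
  by (auto simp: scalar_prod_def lessThan_atLeast0 intro!: sum.cong)

lemma smult_mat_mult_vec:
  "A \<in> carrier_mat r c \<Longrightarrow> v \<in> carrier_vec c \<Longrightarrow> (k \<cdot>\<^sub>m A) *\<^sub>v (v :: complex vec) = k \<cdot>\<^sub>v (A *\<^sub>v v)"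
  by (intro eq_vecI) (auto simp: scalar_prod_def sum_distrib_left ac_simps)

lemma mult_mat_vec_zero: "A \<in> carrier_mat r c \<Longrightarrow> A *\<^sub>v 0\<^sub>v c = 0\<^sub>v r"
  by (intro eq_vecI) auto

lemma eq_mat_if_mult_vec_eq:
  assumes A: "(A :: complex mat) \<in> carrier_mat r c" and B: "B \<in> carrier_mat r c"
    and eq: "\<And>v. v \<in> carrier_vec c \<Longrightarrow> A *\<^sub>v v = B *\<^sub>v v"
  shows "A = B"
proof (rule eq_matI)
  fix i j assume "i < dim_row B" "j < dim_col B"
  then have ij: "i < r" "j < c" using B by auto
  then have "A $$ (i, j) = (A *\<^sub>v unit_vec c j) $ i" using A by simp
  also have "\<dots> = (B *\<^sub>v unit_vec c j) $ i" using eq by simp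
  also have "\<dots> = B $$ (i, j)" using B ij by simp
  finally show "A $$ (i, j) = B $$ (i, j)" .
qed (use A B in auto)

lemma adj_carrier[simp]: "A \<in> carrier_mat r c \<Longrightarrow> adj A \<in> carrier_mat c r"
  by (auto simp: adj_def)

lemma adj_dims[simp]: "dim_row (adj A) = dim_col A" "dim_col (adj A) = dim_row A"
  by (auto simp: adj_def)

lemma adj_index[simp]: "i < dim_col A \<Longrightarrow> j < dim_row A \<Longrightarrow> adj A $$ (i, j) = cnj (A $$ (j, i))"
  by (auto simp: adj_def)

lemma adj_adj[simp]: "adj (adj A) = A"
  by (rule eq_matI) auto

lemma adj_one[simp]: "adj (1\<^sub>m n) = 1\<^sub>m n"
  by (rule eq_matI) auto

lemma adj_mult: "A \<in> carrier_mat r k \<Longrightarrow> B \<in> carrier_mat k c \<Longrightarrow> adj (A * B) = adj B * adj A"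
  by (intro eq_matI) (auto simp: scalar_prod_def intro!: sum.cong)

lemma adj_add: "A \<in> carrier_mat r c \<Longrightarrow> B \<in> carrier_mat r c \<Longrightarrow> adj (A + B) = adj A + adj B"
  by (intro eq_matI) auto

lemma adj_minus: "A \<in> carrier_mat r c \<Longrightarrow> B \<in> carrier_mat r c \<Longrightarrow> adj (A - B) = adj A - adj B"
  by (intro eq_matI) auto

lemma adj_smult: "adj (k \<cdot>\<^sub>m A) = cnj k \<cdot>\<^sub>m adj A"
  by (intro eq_matI) auto

lemma cinner_adj:
  assumes A: "A \<in> carrier_mat r c" and u: "u \<in> carrier_vec c" and v: "v \<in> carrier_vec r"
  shows "cinner (A *\<^sub>v u) v = cinner u (adj A *\<^sub>v v)"
proof -
  have "cinner (A *\<^sub>v u) v = (\<Sum>i<r. \<Sum>j<c. cnj (A $$ (i, j)) * cnj (u $ j) * v $ i)"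
    unfolding cinner_def using A u v
    by (auto simp: index_mult_mat_vec_sum cnj_sum sum_distrib_right simp del: index_mult_mat_vec
        intro!: sum.cong)
  also have "\<dots> = (\<Sum>j<c. cnj (u $ j) * (\<Sum>i<r. adj A $$ (j, i) * v $ i))"
    using A by (subst sum.swap) (auto simp: sum_distrib_left ac_simps intro!: sum.cong)
  also have "\<dots> = cinner u (adj A *\<^sub>v v)"
    unfolding cinner_def using A v
    by (auto simp: index_mult_mat_vec_sum[OF adj_carrier[OF A] v] simp del: index_mult_mat_vec
        intro!: sum.cong)
  finally show ?thesis .
qed

lemma unitary_mat_carrier: "unitary_mat d A \<Longrightarrow> A \<in> carrier_mat d d"
  unfolding unitary_mat_def by simp

lemma unitary_matI:
  assumes A: "A \<in> carrier_mat d d" and inv: "\<And>v. v \<in> carrier_vec d \<Longrightarrow> adj A *\<^sub>v (A *\<^sub>v v) = v"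
  shows "unitary_mat d A"
proof -
  have "adj A * A = 1\<^sub>m d"
    using A by (intro eq_mat_if_mult_vec_eq[of _ d d]) (auto simp: inv assoc_mult_mat_vec[of _ d d _ d])
  then show ?thesis using A unfolding unitary_mat_def by simp
qed

lemma unitary_adj_mult_vec:
  assumes "unitary_mat d A" "v \<in> carrier_vec d" shows "adj A *\<^sub>v (A *\<^sub>v v) = v"
proof -
  have "A \<in> carrier_mat d d" "adj A * A = 1\<^sub>m d" using assms(1) unfolding unitary_mat_def by auto
  then show ?thesis using assms(2) by (metis adj_carrier assoc_mult_mat_vec one_mult_mat_vec)
qed

lemma unitary_mult_adj: "unitary_mat d A \<Longrightarrow> A * adj A = 1\<^sub>m d"
  using mat_mult_left_right_inverse[of "adj A" d A] unfolding unitary_mat_def by auto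

lemma unitary_mat_adj: "unitary_mat d A \<Longrightarrow> unitary_mat d (adj A)"
  using unitary_mult_adj unfolding unitary_mat_def by auto

lemma unitary_mat_one: "unitary_mat d (1\<^sub>m d)"
  unfolding unitary_mat_def by simp

lemma unitary_mat_mult:
  assumes U: "unitary_mat d A" and V: "unitary_mat d B" shows "unitary_mat d (A * B)"
proof (rule unitary_matI)
  have A: "A \<in> carrier_mat d d" and B: "B \<in> carrier_mat d d" using U V unitary_mat_carrier by auto
  then show "A * B \<in> carrier_mat d d" by simp
  fix v :: "complex vec" assume v: "v \<in> carrier_vec d"
  then have "adj (A * B) *\<^sub>v ((A * B) *\<^sub>v v) = adj B *\<^sub>v (adj A *\<^sub>v (A *\<^sub>v (B *\<^sub>v v)))"
    using A B by (simp add: adj_mult[OF A B] assoc_mult_mat_vec[of _ d d _ d])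
  then show "adj (A * B) *\<^sub>v ((A * B) *\<^sub>v v) = v"
    using U V v B by (simp add: unitary_adj_mult_vec)
qed

lemma sq_norm_unitary:
  assumes U: "unitary_mat d A" and v: "v \<in> carrier_vec d" shows "sq_norm_vec (A *\<^sub>v v) = sq_norm_vec v"
proof -
  have "cinner (A *\<^sub>v v) (A *\<^sub>v v) = cinner v v"
    using cinner_adj[of A d d v] unitary_adj_mult_vec[OF U v] unitary_mat_carrier[OF U] v by simp
  then show ?thesis by (simp add: cinner_self)
qed

section \<open>Orthogonal projections and reflections\<close>

definition proj_mat :: "nat \<Rightarrow> complex mat \<Rightarrow> bool" where
  "proj_mat d P \<longleftrightarrow> P \<in> carrier_mat d d \<and> adj P = P \<and> P * P = P"

lemma proj_matI:
  assumes "P \<in> carrier_mat d d" and "adj P = P"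
    and "\<And>v. v \<in> carrier_vec d \<Longrightarrow> P *\<^sub>v (P *\<^sub>v v) = P *\<^sub>v v"
  shows "proj_mat d P"
  unfolding proj_mat_def using assms eq_mat_if_mult_vec_eq[of "P * P" d d P] by auto

lemma proj_mat_carrier: "proj_mat d P \<Longrightarrow> P \<in> carrier_mat d d"
  unfolding proj_mat_def by simp

lemma proj_mat_idem_vec: "proj_mat d P \<Longrightarrow> v \<in> carrier_vec d \<Longrightarrow> P *\<^sub>v (P *\<^sub>v v) = P *\<^sub>v v"
  unfolding proj_mat_def by (metis assoc_mult_mat_vec)

lemma proj_mat_cinner:
  "proj_mat d P \<Longrightarrow> u \<in> carrier_vec d \<Longrightarrow> v \<in> carrier_vec d \<Longrightarrow> cinner u (P *\<^sub>v v) = cinner (P *\<^sub>v u) v"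
  unfolding proj_mat_def by (metis cinner_adj)

lemma compl_mult_vec: "(P :: complex mat) \<in> carrier_mat d d \<Longrightarrow> v \<in> carrier_vec d \<Longrightarrow> (1\<^sub>m d - P) *\<^sub>v v = v - P *\<^sub>v v"
  by (simp add: minus_mult_distrib_mat_vec[of _ d d])

lemma proj_mult_compl:
  assumes P: "proj_mat d P" and v: "v \<in> carrier_vec d" shows "P *\<^sub>v ((1\<^sub>m d - P) *\<^sub>v v) = 0\<^sub>v d"
  using P v proj_mat_carrier[OF P]
  by (auto simp: compl_mult_vec mult_minus_distrib_mat_vec proj_mat_idem_vec)

lemma compl_mult_proj:
  assumes P: "proj_mat d P" and v: "v \<in> carrier_vec d" shows "(1\<^sub>m d - P) *\<^sub>v (P *\<^sub>v v) = 0\<^sub>v d"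
  using P v proj_mat_carrier[OF P]
  by (auto simp: compl_mult_vec proj_mat_idem_vec)

lemma proj_mat_compl:
  assumes P: "proj_mat d P" shows "proj_mat d (1\<^sub>m d - P)"
proof (rule proj_matI)
  have P_carrier: "P \<in> carrier_mat d d" using proj_mat_carrier[OF P] .
  then show "1\<^sub>m d - P \<in> carrier_mat d d" by (simp add: minus_carrier_mat)
  show "adj (1\<^sub>m d - P) = 1\<^sub>m d - P"
    using P P_carrier by (simp add: adj_minus[of _ d d] proj_mat_def)
  fix v :: "complex vec" assume v: "v \<in> carrier_vec d"
  then show "(1\<^sub>m d - P) *\<^sub>v ((1\<^sub>m d - P) *\<^sub>v v) = (1\<^sub>m d - P) *\<^sub>v v"
    using proj_mult_compl[OF P v] P_carrier by (simp add: compl_mult_vec)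
qed

lemma reflection_mult_vec:
  "(P :: complex mat) \<in> carrier_mat d d \<Longrightarrow> v \<in> carrier_vec d \<Longrightarrow> (1\<^sub>m d - 2 \<cdot>\<^sub>m P) *\<^sub>v v = v - 2 \<cdot>\<^sub>v (P *\<^sub>v v)"
  by (simp add: minus_mult_distrib_mat_vec[of _ d d] smult_mat_mult_vec[of _ d d] minus_carrier_mat)

lemma unitary_reflection:
  assumes P: "proj_mat d P" shows "unitary_mat d (1\<^sub>m d - 2 \<cdot>\<^sub>m P)"
proof (rule unitary_matI)
  have P_carrier: "P \<in> carrier_mat d d" using proj_mat_carrier[OF P] .
  then show "1\<^sub>m d - 2 \<cdot>\<^sub>m P \<in> carrier_mat d d" by (simp add: minus_carrier_mat)
  have adj: "adj (1\<^sub>m d - 2 \<cdot>\<^sub>m P) = 1\<^sub>m d - 2 \<cdot>\<^sub>m P"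
    using P P_carrier by (simp add: adj_minus[of _ d d] adj_smult proj_mat_def)
  fix v :: "complex vec" assume v: "v \<in> carrier_vec d"
  have "P *\<^sub>v (v - 2 \<cdot>\<^sub>v (P *\<^sub>v v)) = - (P *\<^sub>v v)"
    using P_carrier v proj_mat_idem_vec[OF P v]
    by (auto simp: mult_minus_distrib_mat_vec mult_mat_vec intro!: eq_vecI)
  then show "adj (1\<^sub>m d - 2 \<cdot>\<^sub>m P) *\<^sub>v ((1\<^sub>m d - 2 \<cdot>\<^sub>m P) *\<^sub>v v) = v"
    unfolding adj using P_carrier v by (auto simp: reflection_mult_vec intro!: eq_vecI)
qed

text \<open>For \<open>u = 0\<close> the division is by zero, so \<open>vec_proj u = 0\<close> and \<open>householder u = 1\<close>.\<close>
definition vec_proj :: "complex vec \<Rightarrow> complex mat" where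
  "vec_proj u = mat (dim_vec u) (dim_vec u) (\<lambda>(i, j). u $ i * cnj (u $ j) / of_real (sq_norm_vec u))"

definition householder :: "complex vec \<Rightarrow> complex mat" where
  "householder u = 1\<^sub>m (dim_vec u) - 2 \<cdot>\<^sub>m vec_proj u"

lemma vec_proj_carrier[simp]: "u \<in> carrier_vec d \<Longrightarrow> vec_proj u \<in> carrier_mat d d"
  by (simp add: vec_proj_def)

lemma vec_proj_mult_vec:
  assumes u: "u \<in> carrier_vec d" and v: "v \<in> carrier_vec d"
  shows "vec_proj u *\<^sub>v v = (cinner u v / of_real (sq_norm_vec u)) \<cdot>\<^sub>v u"
proof (rule eq_vecI)
  fix i assume "i < dim_vec ((cinner u v / of_real (sq_norm_vec u)) \<cdot>\<^sub>v u)"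
  then have i: "i < d" using u by simp
  have "(vec_proj u *\<^sub>v v) $ i = (\<Sum>j<d. vec_proj u $$ (i, j) * v $ j)"
    by (rule index_mult_mat_vec_sum[OF vec_proj_carrier[OF u] v i])
  also have "\<dots> = (\<Sum>j<d. u $ i * (cnj (u $ j) * v $ j) / of_real (sq_norm_vec u))"
    using u i by (auto simp: vec_proj_def intro!: sum.cong)
  also have "\<dots> = (\<Sum>j<d. cnj (u $ j) * v $ j / of_real (sq_norm_vec u) * u $ i)"
    by (intro sum.cong) auto
  also have "\<dots> = cinner u v / of_real (sq_norm_vec u) * u $ i"
    using v unfolding cinner_def by (simp add: sum_divide_distrib sum_distrib_right)
  finally show "(vec_proj u *\<^sub>v v) $ i = ((cinner u v / of_real (sq_norm_vec u)) \<cdot>\<^sub>v u) $ i"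
    using u i by simp
qed (use u in \<open>simp add: vec_proj_def\<close>)

lemma proj_mat_vec_proj:
  assumes u: "u \<in> carrier_vec d" shows "proj_mat d (vec_proj u)"
proof (rule proj_matI)
  show "vec_proj u \<in> carrier_mat d d" using u by simp
  show "adj (vec_proj u) = vec_proj u"
    by (intro eq_matI) (auto simp: vec_proj_def)
  fix v :: "complex vec" assume v: "v \<in> carrier_vec d"
  show "vec_proj u *\<^sub>v (vec_proj u *\<^sub>v v) = vec_proj u *\<^sub>v v"
  proof (cases "sq_norm_vec u = 0")
    case True
    then show ?thesis using u v by (simp add: vec_proj_mult_vec[of _ d])
  next
    case False
    then show ?thesis using u v
      by (simp add: vec_proj_mult_vec[of _ d] cinner_smult_right cinner_self)
  qed
qed

lemma householder_carrier[simp]: "u \<in> carrier_vec d \<Longrightarrow> householder u \<in> carrier_mat d d"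
  by (simp add: householder_def minus_carrier_mat)

lemma householder_mult_vec:
  assumes u: "u \<in> carrier_vec d" and v: "v \<in> carrier_vec d"
  shows "householder u *\<^sub>v v = v - (2 * cinner u v / of_real (sq_norm_vec u)) \<cdot>\<^sub>v u"
  using u v by (simp add: householder_def reflection_mult_vec[of _ d] vec_proj_mult_vec[of _ d]
      smult_smult_assoc)

lemma unitary_householder: "u \<in> carrier_vec d \<Longrightarrow> unitary_mat d (householder u)"
  unfolding householder_def by (simp add: unitary_reflection proj_mat_vec_proj)

lemma householder_diff_mult_vec:
  assumes u: "u \<in> carrier_vec d" and v: "v \<in> carrier_vec d"
    and norm: "sq_norm_vec u = sq_norm_vec v" and real: "cinner u v = cinner v u"
  shows "householder (u - v) *\<^sub>v u = v"
proof (cases "sq_norm_vec (u - v) = 0")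
  case True
  then have "(u - v) $ i = 0" if "i < d" for i
    using sq_norm_vec_eq_0[of "u - v"] u v that by simp
  then have "u = v" using u v by (intro eq_vecI) auto
  then show ?thesis using True u v householder_mult_vec[of "u - v" d u] by auto
next
  case False
  have w: "u - v \<in> carrier_vec d" using u v by simp
  have "of_real (sq_norm_vec (u - v)) = cinner (u - v) u - cinner (u - v) v"
    using u v w by (simp add: cinner_self[symmetric] cinner_diff_right)
  also have "\<dots> = 2 * cinner (u - v) u"
    using u v norm real by (simp add: cinner_diff_left[of _ d] cinner_self)
  finally have eq: "of_real (sq_norm_vec (u - v)) = 2 * cinner (u - v) u" .
  then have "cinner (u - v) u \<noteq> 0" using False by auto
  then have "2 * cinner (u - v) u / of_real (sq_norm_vec (u - v)) = 1" by (simp add: eq)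
  then show ?thesis using u v by (auto simp: householder_mult_vec[OF w u] intro!: eq_vecI)
qed

section \<open>Ancilla registers\<close>

lemma sum_lessThan_mult_split: "(\<Sum>l<r * (q::nat). h l) = (\<Sum>a<r. \<Sum>b<q. h (a * q + b))"
proof -
  have "(\<Sum>l<r * q. h l) = (\<Sum>a<r. sum h {a * q..<a * q + q})" by (rule sum.nat_group[symmetric])
  also have "\<dots> = (\<Sum>a<r. \<Sum>b<q. h (a * q + b))"
  proof (rule sum.cong[OF refl])
    fix a
    have "sum h {a * q..<a * q + q} = sum h {0 + a * q..<q + a * q}" by (simp add: add.commute)
    also have "\<dots> = (\<Sum>b\<in>{0..<q}. h (b + a * q))" by (rule sum.shift_bounds_nat_ivl)
    finally show "sum h {a * q..<a * q + q} = (\<Sum>b<q. h (a * q + b))"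
      by (simp add: atLeast0LessThan add.commute)
  qed
  finally show ?thesis .
qed

lemma mult_add_less: assumes "w < r" "f < (q::nat)" shows "w * q + f < r * q"
proof -
  have "w * q + f < (w + 1) * q" using assms by simp
  also have "\<dots> \<le> r * q" using assms by (intro mult_right_mono) auto
  finally show ?thesis .
qed

text \<open>The ancilla register is the last tensor factor: index \<^term>\<open>w * 2^m + f\<close> is system basis
  state \<^term>\<open>w\<close> with ancilla value \<^term>\<open>f\<close>, and \<^term>\<open>anc_block r m f v\<close> is the system vector
  attached to ancilla value \<^term>\<open>f\<close>.\<close>
definition anc_block :: "nat \<Rightarrow> nat \<Rightarrow> nat \<Rightarrow> complex vec \<Rightarrow> complex vec" where
  "anc_block r m f v = vec r (\<lambda>w. v $ (w * 2^m + f))"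

lemma anc_block_carrier[simp]: "anc_block r m f v \<in> carrier_vec r"
  and dim_anc_block[simp]: "dim_vec (anc_block r m f v) = r"
  and index_anc_block[simp]: "w < r \<Longrightarrow> anc_block r m f v $ w = v $ (w * 2^m + f)"
  by (simp_all add: anc_block_def)

lemma anc_block_eqI:
  assumes "v \<in> carrier_vec (r * 2^m)" "u \<in> carrier_vec (r * 2^m)"
    and "\<And>f. f < 2^m \<Longrightarrow> anc_block r m f v = anc_block r m f u"
  shows "v = u"
proof (rule eq_vecI)
  fix l assume "l < dim_vec u"
  then have l: "l div 2^m < r" "l mod 2^m < 2^m" using assms(2) by (auto simp: less_mult_imp_div_less)
  have "v $ l = anc_block r m (l mod 2^m) v $ (l div 2^m)" using l by (simp only: index_anc_block div_mult_mod_eq)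
  also have "\<dots> = anc_block r m (l mod 2^m) u $ (l div 2^m)" using assms(3)[OF l(2)] by simp
  also have "\<dots> = u $ l" using l by (simp only: index_anc_block div_mult_mod_eq)
  finally show "v $ l = u $ l" .
qed (use assms in simp)

lemma anc_block_add:
  "u \<in> carrier_vec (r * 2^m) \<Longrightarrow> v \<in> carrier_vec (r * 2^m) \<Longrightarrow> f < 2^m \<Longrightarrow>
   anc_block r m f (u + v) = anc_block r m f u + anc_block r m f v"
  by (intro eq_vecI) (auto simp: mult_add_less)

lemma anc_block_unit_vec_0:
  "f < 2^m \<Longrightarrow> anc_block r m f (unit_vec (r * 2^m) 0) = (if f = 0 then unit_vec r 0 else 0\<^sub>v r)"
  by (intro eq_vecI) (auto simp: mult_add_less)

lemma sq_norm_vec_anc_nonzero: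
  assumes v: "v \<in> carrier_vec (r * 2^m)"
  shows "(\<Sum>l\<in>{l. l mod 2^m \<noteq> 0} \<inter> {..<r * 2^m}. (cmod (v $ l))\<^sup>2) =
    sq_norm_vec v - sq_norm_vec (anc_block r m 0 v)"
proof -
  let ?h = "\<lambda>l. (cmod (v $ l))\<^sup>2"
  have "(\<Sum>l\<in>{l. l mod 2^m \<noteq> 0} \<inter> {..<r * 2^m}. ?h l) = (\<Sum>l<r * 2^m. if l mod 2^m \<noteq> 0 then ?h l else 0)"
    by (subst Int_commute) (simp add: sum.inter_restrict)
  also have "\<dots> = (\<Sum>w<r. \<Sum>f<2^m. if f \<noteq> 0 then ?h (w * 2^m + f) else 0)"
    by (subst sum_lessThan_mult_split) simp
  also have "\<dots> = (\<Sum>w<r. (\<Sum>f<2^m. ?h (w * 2^m + f)) - ?h (w * 2^m))"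
  proof (intro sum.cong refl)
    fix w
    have "(\<Sum>f<2^m. ?h (w * 2^m + f)) =
        (\<Sum>f<2^m. (if f = 0 then ?h (w * 2^m + f) else 0) + (if f \<noteq> 0 then ?h (w * 2^m + f) else 0))"
      by (intro sum.cong) auto
    then show "(\<Sum>f<2^m. if f \<noteq> 0 then ?h (w * 2^m + f) else 0) = (\<Sum>f<2^m. ?h (w * 2^m + f)) - ?h (w * 2^m)"
      by (simp add: sum.distrib)
  qed
  also have "\<dots> = sq_norm_vec v - sq_norm_vec (anc_block r m 0 v)"
    using v by (simp add: sq_norm_vec_def sum_subtractf sum_lessThan_mult_split)
  finally show ?thesis .
qed

lemma tensor_id_carrier[simp]: "A \<in> carrier_mat r r \<Longrightarrow> tensor_id m A \<in> carrier_mat (r * 2^m) (r * 2^m)"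
  by (auto simp: tensor_id_def)

lemma dim_tensor_id[simp]:
  "dim_row (tensor_id m A) = dim_row A * 2^m" "dim_col (tensor_id m A) = dim_col A * 2^m"
  by (simp_all add: tensor_id_def)

lemma index_tensor_id:
  "A \<in> carrier_mat r r \<Longrightarrow> i < r * 2^m \<Longrightarrow> j < r * 2^m \<Longrightarrow>
   tensor_id m A $$ (i, j) = (if i mod 2^m = j mod 2^m then A $$ (i div 2^m, j div 2^m) else 0)"
  by (auto simp: tensor_id_def)

lemma anc_block_tensor_id:
  assumes A: "A \<in> carrier_mat r r" and v: "v \<in> carrier_vec (r * 2^m)" and f: "f < 2^m"
  shows "anc_block r m f (tensor_id m A *\<^sub>v v) = A *\<^sub>v anc_block r m f v"
proof (rule eq_vecI)
  fix w assume "w < dim_vec (A *\<^sub>v anc_block r m f v)"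
  then have w: "w < r" using A by simp
  have "anc_block r m f (tensor_id m A *\<^sub>v v) $ w
      = (\<Sum>a<r. \<Sum>b<2^m. tensor_id m A $$ (w * 2^m + f, a * 2^m + b) * v $ (a * 2^m + b))"
    using w f v A
    by (simp add: index_mult_mat_vec_sum[of _ "r * 2^m" "r * 2^m"] mult_add_less sum_lessThan_mult_split
        del: index_mult_mat_vec)
  also have "\<dots> = (\<Sum>a<r. \<Sum>b<2^m. if b = f then A $$ (w, a) * v $ (a * 2^m + f) else 0)"
    using w f by (intro sum.cong refl) (auto simp: index_tensor_id[OF A] mult_add_less)
  also have "\<dots> = (A *\<^sub>v anc_block r m f v) $ w"
    using A w f by (simp add: index_mult_mat_vec_sum[OF A] del: index_mult_mat_vec)
  finally show "anc_block r m f (tensor_id m A *\<^sub>v v) $ w = (A *\<^sub>v anc_block r m f v) $ w" .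
qed (use A in simp)

lemma adj_tensor_id:
  assumes A: "A \<in> carrier_mat r r" shows "adj (tensor_id m A) = tensor_id m (adj A)"
proof (rule eq_matI)
  fix i j assume "i < dim_row (tensor_id m (adj A))" "j < dim_col (tensor_id m (adj A))"
  then have ij: "i < r * 2^m" "j < r * 2^m" using A by auto
  then have "i div 2^m < r" "j div 2^m < r" by (auto simp: less_mult_imp_div_less)
  then show "adj (tensor_id m A) $$ (i, j) = tensor_id m (adj A) $$ (i, j)"
    using ij A index_tensor_id[OF A ij(2,1)] index_tensor_id[OF adj_carrier[OF A] ij] by auto
qed (use A in auto)

lemma unitary_tensor_id:
  assumes U: "unitary_mat r A" shows "unitary_mat (r * 2^m) (tensor_id m A)"
proof (rule unitary_matI)
  have A: "A \<in> carrier_mat r r" using U unitary_mat_carrier by auto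
  then show "tensor_id m A \<in> carrier_mat (r * 2^m) (r * 2^m)" by simp
  fix v :: "complex vec" assume v: "v \<in> carrier_vec (r * 2^m)"
  have Av: "tensor_id m A *\<^sub>v v \<in> carrier_vec (r * 2^m)"
    using mult_mat_vec_carrier[OF tensor_id_carrier[OF A] v] .
  show "adj (tensor_id m A) *\<^sub>v (tensor_id m A *\<^sub>v v) = v"
  proof (rule anc_block_eqI[of _ r m])
    show "adj (tensor_id m A) *\<^sub>v (tensor_id m A *\<^sub>v v) \<in> carrier_vec (r * 2^m)"
      using mult_mat_vec_carrier[OF tensor_id_carrier[OF adj_carrier[OF A]] Av] by (simp add: adj_tensor_id[OF A])
    fix f :: nat assume f: "f < 2^m"
    show "anc_block r m f (adj (tensor_id m A) *\<^sub>v (tensor_id m A *\<^sub>v v)) = anc_block r m f v"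
      unfolding adj_tensor_id[OF A] anc_block_tensor_id[OF adj_carrier[OF A] Av f]
        anc_block_tensor_id[OF A v f] using unitary_adj_mult_vec[OF U] by simp
  qed (use v in simp)
qed

lemma mod_mult_iff:
  assumes q: "(q::nat) > 0"
  shows "i mod (q * p) = j mod (q * p) \<longleftrightarrow> i mod q = j mod q \<and> (i div q) mod p = (j div q) mod p"
proof
  assume h: "i mod (q * p) = j mod (q * p)"
  have "i mod q = (i mod (q * p)) mod q" "j mod q = (j mod (q * p)) mod q"
    by (simp_all add: mod_mult2_eq)
  moreover have "(i div q) mod p = (i mod (q * p)) div q" "(j div q) mod p = (j mod (q * p)) div q"
    by (simp_all add: mod_mult2_eq q)
  ultimately show "i mod q = j mod q \<and> (i div q) mod p = (j div q) mod p" using h by simp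
next
  assume "i mod q = j mod q \<and> (i div q) mod p = (j div q) mod p"
  then show "i mod (q * p) = j mod (q * p)" by (simp add: mod_mult2_eq)
qed

lemma tensor_id_add:
  assumes A: "A \<in> carrier_mat r r" shows "tensor_id (a + b) A = tensor_id b (tensor_id a A)"
proof (rule eq_matI)
  fix i j assume "i < dim_row (tensor_id b (tensor_id a A))" "j < dim_col (tensor_id b (tensor_id a A))"
  then have ij: "i < r * 2^a * 2^b" "j < r * 2^a * 2^b" using A by (auto simp: tensor_id_def)
  then have ij': "i < r * 2^(a + b)" "j < r * 2^(a + b)" by (simp_all add: power_add mult.assoc)
  have d: "i div 2^b < r * 2^a" "j div 2^b < r * 2^a" using ij by (auto simp: less_mult_imp_div_less)
  have div: "x div 2^b div 2^a = x div 2^(a + b)" for x :: nat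
    by (metis div_mult2_eq power_add mult.commute)
  have "(i mod 2^(a + b) = j mod 2^(a + b)) \<longleftrightarrow>
      i mod 2^b = j mod 2^b \<and> (i div 2^b) mod 2^a = (j div 2^b) mod 2^a"
    using mod_mult2_eq[of _ "2^b" "2^a"] mod_mult_iff[of "2^b" i "2^a" j] by (simp add: power_add mult.commute)
  then show "tensor_id (a + b) A $$ (i, j) = tensor_id b (tensor_id a A) $$ (i, j)"
    using index_tensor_id[OF tensor_id_carrier[OF A] ij] index_tensor_id[OF A ij'] index_tensor_id[OF A d] div
    by auto
qed (use A in \<open>auto simp: power_add mult.assoc tensor_id_def\<close>)

definition anc_swap :: "nat \<Rightarrow> nat \<Rightarrow> nat \<Rightarrow> complex mat" where
  "anc_swap r m k = mat (r * 2^m) (r * 2^m)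
     (\<lambda>(i, j). if j = i div 2^m * 2^m + Transposition.transpose 0 k (i mod 2^m) then 1 else 0)"

lemma anc_swap_carrier[simp]: "anc_swap r m k \<in> carrier_mat (r * 2^m) (r * 2^m)"
  by (simp add: anc_swap_def)

lemma transpose_less: "k < q \<Longrightarrow> f < q \<Longrightarrow> Transposition.transpose 0 k f < (q::nat)"
  by (simp add: transpose_def)

lemma anc_block_anc_swap:
  assumes v: "v \<in> carrier_vec (r * 2^m)" and f: "f < 2^m" and k: "k < 2^m"
  shows "anc_block r m f (anc_swap r m k *\<^sub>v v) = anc_block r m (Transposition.transpose 0 k f) v"
proof (rule eq_vecI)
  fix w assume "w < dim_vec (anc_block r m (Transposition.transpose 0 k f) v)"
  then have w: "w < r" by simp
  have tk: "Transposition.transpose 0 k f < 2^m" using transpose_less[OF k f] .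
  have "anc_block r m f (anc_swap r m k *\<^sub>v v) $ w = (\<Sum>l<r * 2^m. anc_swap r m k $$ (w * 2^m + f, l) * v $ l)"
    using w f by (simp add: index_mult_mat_vec_sum[OF anc_swap_carrier v] mult_add_less del: index_mult_mat_vec)
  also have "\<dots> = (\<Sum>l<r * 2^m. if l = w * 2^m + Transposition.transpose 0 k f then v $ l else 0)"
    using w f by (intro sum.cong) (auto simp: anc_swap_def mult_add_less)
  also have "\<dots> = anc_block r m (Transposition.transpose 0 k f) v $ w"
    using w tk by (simp add: mult_add_less)
  finally show "anc_block r m f (anc_swap r m k *\<^sub>v v) $ w = anc_block r m (Transposition.transpose 0 k f) v $ w" .
qed simp

lemma adj_anc_swap:
  assumes k: "k < 2^m" shows "adj (anc_swap r m k) = anc_swap r m k"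
proof (rule eq_matI)
  fix i j assume "i < dim_row (anc_swap r m k)" "j < dim_col (anc_swap r m k)"
  then have ij: "i < r * 2^m" "j < r * 2^m" by (auto simp: anc_swap_def)
  have "b = a div 2^m * 2^m + Transposition.transpose 0 k (a mod 2^m)"
    if "a = b div 2^m * 2^m + Transposition.transpose 0 k (b mod 2^m)" for a b :: nat
  proof -
    have "Transposition.transpose 0 k (b mod 2^m) < 2^m" using transpose_less[OF k] by simp
    then have "a div 2^m = b div 2^m" "a mod 2^m = Transposition.transpose 0 k (b mod 2^m)"
      unfolding that by simp_all
    then show ?thesis using div_mult_mod_eq[of b "2^m"] by simp
  qed
  then have "i = j div 2^m * 2^m + Transposition.transpose 0 k (j mod 2^m) \<longleftrightarrow>
      j = i div 2^m * 2^m + Transposition.transpose 0 k (i mod 2^m)"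
    by blast
  then show "adj (anc_swap r m k) $$ (i, j) = anc_swap r m k $$ (i, j)"
    using ij by (simp add: anc_swap_def)
qed (auto simp: anc_swap_def)

text \<open>A coherent measurement of the projection \<^term>\<open>P\<close>: if ancilla block \<^term>\<open>k\<close> is empty, the
  \<^term>\<open>P\<close>-part of block \<^term>\<open>0\<close> is moved into it.\<close>
definition flag_gate :: "nat \<Rightarrow> nat \<Rightarrow> complex mat \<Rightarrow> nat \<Rightarrow> complex mat" where
  "flag_gate r m P k = tensor_id m P * anc_swap r m k + tensor_id m (1\<^sub>m r - P)"

context
  fixes r m :: nat and P :: "complex mat" and k :: nat
  assumes P: "proj_mat r P" and k: "k < 2^m"
begin

private lemma P_carrier: "P \<in> carrier_mat r r"
  using proj_mat_carrier[OF P] .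

private lemma Q_carrier: "1\<^sub>m r - P \<in> carrier_mat r r"
  using P_carrier by (simp add: minus_carrier_mat)

lemma flag_gate_carrier: "flag_gate r m P k \<in> carrier_mat (r * 2^m) (r * 2^m)"
  unfolding flag_gate_def using P_carrier Q_carrier by simp

lemma anc_block_flag_gate:
  assumes v: "v \<in> carrier_vec (r * 2^m)" and f: "f < 2^m"
  shows "anc_block r m f (flag_gate r m P k *\<^sub>v v) =
    P *\<^sub>v anc_block r m (Transposition.transpose 0 k f) v + (1\<^sub>m r - P) *\<^sub>v anc_block r m f v"
proof -
  have "flag_gate r m P k *\<^sub>v v = tensor_id m P *\<^sub>v (anc_swap r m k *\<^sub>v v) + tensor_id m (1\<^sub>m r - P) *\<^sub>v v"
    unfolding flag_gate_def
    using add_mult_distrib_mat_vec[OF mult_carrier_mat[OF tensor_id_carrier[OF P_carrier] anc_swap_carrier]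
        tensor_id_carrier[OF Q_carrier] v] assoc_mult_mat_vec[OF tensor_id_carrier[OF P_carrier] anc_swap_carrier v]
    by simp
  moreover have "anc_swap r m k *\<^sub>v v \<in> carrier_vec (r * 2^m)"
    using mult_mat_vec_carrier[OF anc_swap_carrier v] .
  ultimately show ?thesis
    using mult_mat_vec_carrier[OF tensor_id_carrier[OF P_carrier]] mult_mat_vec_carrier[OF tensor_id_carrier[OF Q_carrier] v]
      P_carrier Q_carrier v f k
    by (simp add: anc_block_add[of _ r m] anc_block_tensor_id anc_block_anc_swap)
qed

lemma anc_block_adj_flag_gate:
  assumes v: "v \<in> carrier_vec (r * 2^m)" and f: "f < 2^m"
  shows "anc_block r m f (adj (flag_gate r m P k) *\<^sub>v v) =
    P *\<^sub>v anc_block r m (Transposition.transpose 0 k f) v + (1\<^sub>m r - P) *\<^sub>v anc_block r m f v"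
proof -
  have adjP: "adj P = P" and adjQ: "adj (1\<^sub>m r - P) = 1\<^sub>m r - P"
    using P proj_mat_compl[OF P] unfolding proj_mat_def by auto
  have "adj (flag_gate r m P k) = anc_swap r m k * tensor_id m P + tensor_id m (1\<^sub>m r - P)"
    unfolding flag_gate_def
    using adj_add[OF mult_carrier_mat[OF tensor_id_carrier[OF P_carrier] anc_swap_carrier] tensor_id_carrier[OF Q_carrier]]
      adj_mult[OF tensor_id_carrier[OF P_carrier] anc_swap_carrier] adj_tensor_id[OF P_carrier] adj_tensor_id[OF Q_carrier]
      adj_anc_swap[OF k] adjP adjQ
    by simp
  then have "adj (flag_gate r m P k) *\<^sub>v v = anc_swap r m k *\<^sub>v (tensor_id m P *\<^sub>v v) + tensor_id m (1\<^sub>m r - P) *\<^sub>v v"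
    using add_mult_distrib_mat_vec[OF mult_carrier_mat[OF anc_swap_carrier tensor_id_carrier[OF P_carrier]]
        tensor_id_carrier[OF Q_carrier] v] assoc_mult_mat_vec[OF anc_swap_carrier tensor_id_carrier[OF P_carrier] v]
    by simp
  moreover have "tensor_id m P *\<^sub>v v \<in> carrier_vec (r * 2^m)"
    using mult_mat_vec_carrier[OF tensor_id_carrier[OF P_carrier] v] .
  ultimately show ?thesis
    using mult_mat_vec_carrier[OF anc_swap_carrier] mult_mat_vec_carrier[OF tensor_id_carrier[OF Q_carrier] v]
      P_carrier Q_carrier v f k transpose_less[OF k f]
    by (simp add: anc_block_add[of _ r m] anc_block_tensor_id anc_block_anc_swap)
qed

lemma unitary_flag_gate: "unitary_mat (r * 2^m) (flag_gate r m P k)"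
proof (rule unitary_matI[OF flag_gate_carrier])
  fix v :: "complex vec" assume v: "v \<in> carrier_vec (r * 2^m)"
  have Fv: "flag_gate r m P k *\<^sub>v v \<in> carrier_vec (r * 2^m)"
    using mult_mat_vec_carrier[OF flag_gate_carrier v] .
  show "adj (flag_gate r m P k) *\<^sub>v (flag_gate r m P k *\<^sub>v v) = v"
  proof (rule anc_block_eqI[of _ r m])
    show "adj (flag_gate r m P k) *\<^sub>v (flag_gate r m P k *\<^sub>v v) \<in> carrier_vec (r * 2^m)"
      using mult_mat_vec_carrier[OF adj_carrier[OF flag_gate_carrier] Fv] .
    fix f :: nat assume f: "f < 2^m"
    define a where "a = anc_block r m f v"
    define c where "c = anc_block r m (Transposition.transpose 0 k f) v"
    have ac: "a \<in> carrier_vec r" "c \<in> carrier_vec r" unfolding a_def c_def by simp_all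
    have "anc_block r m f (adj (flag_gate r m P k) *\<^sub>v (flag_gate r m P k *\<^sub>v v)) =
        P *\<^sub>v (P *\<^sub>v a + (1\<^sub>m r - P) *\<^sub>v c) + (1\<^sub>m r - P) *\<^sub>v (P *\<^sub>v c + (1\<^sub>m r - P) *\<^sub>v a)"
      using f k transpose_less[OF k f]
      by (simp add: anc_block_adj_flag_gate[OF Fv f] anc_block_flag_gate[OF v] a_def c_def)
    also have "\<dots> = P *\<^sub>v a + (1\<^sub>m r - P) *\<^sub>v a"
    proof -
      have "P *\<^sub>v (P *\<^sub>v a + (1\<^sub>m r - P) *\<^sub>v c) = P *\<^sub>v a"
        using ac P_carrier Q_carrier proj_mult_compl[OF P ac(2)] proj_mat_idem_vec[OF P ac(1)]
        by (simp add: mult_add_distrib_mat_vec[of _ r r])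
      moreover have "(1\<^sub>m r - P) *\<^sub>v (P *\<^sub>v c + (1\<^sub>m r - P) *\<^sub>v a) = (1\<^sub>m r - P) *\<^sub>v a"
        using ac P_carrier Q_carrier proj_mat_idem_vec[OF proj_mat_compl[OF P] ac(1)] compl_mult_proj[OF P ac(2)]
        by (simp add: mult_add_distrib_mat_vec[of _ r r])
      ultimately show ?thesis by simp
    qed
    also have "\<dots> = a"
      using ac P_carrier by (auto simp: compl_mult_vec intro!: eq_vecI)
    finally show "anc_block r m f (adj (flag_gate r m P k) *\<^sub>v (flag_gate r m P k *\<^sub>v v)) = anc_block r m f v"
      unfolding a_def .
  qed (use v in simp)
qed

end

section \<open>Pauli strings and the Choi state\<close>

lemma qbit_0: assumes "a < 2" "b < 2^n" shows "qbit (Suc n) (a * 2^n + b) 0 = a"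
  using assms by (simp add: qbit_def)

lemma qbit_Suc:
  assumes a: "a < 2" and b: "b < 2^n" and k: "k < n"
  shows "qbit (Suc n) (a * 2^n + b) (Suc k) = qbit n b k"
proof -
  obtain p where n: "n = p + Suc k" using less_imp_Suc_add[OF k] by auto
  have "(2::nat)^n = 2^p * (2 * 2^k)" unfolding n power_add by simp
  then have split: "a * 2^n + b = b + (2 * (a * 2^k)) * 2^p" by (simp only: ac_simps)
  have "(b + (2 * (a * 2^k)) * 2^p) div 2^p = 2 * (a * 2^k) + b div 2^p"
    by (rule div_mult_self1) simp
  then have "((a * 2^n + b) div 2^p) mod 2 = (b div 2^p) mod 2" unfolding split by simp
  moreover have "Suc n - 1 - Suc k = p" "n - 1 - k = p" using n by auto
  ultimately show ?thesis unfolding qbit_def by simp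
qed

lemma sum_qbit_prod:
  "(\<Sum>i<2^n. \<Prod>k<n. g k (qbit n i k)) = (\<Prod>k<n. g k 0 + (g k 1 :: 'a :: comm_semiring_1))"
proof (induction n arbitrary: g)
  case 0
  then show ?case by simp
next
  case (Suc n)
  have "(\<Sum>i<2^Suc n. \<Prod>k<Suc n. g k (qbit (Suc n) i k))
      = (\<Sum>a<2. \<Sum>b<2^n. \<Prod>k<Suc n. g k (qbit (Suc n) (a * 2^n + b) k))"
    using sum_lessThan_mult_split[of _ 2 "2^n"] by simp
  also have "\<dots> = (\<Sum>a<2. \<Sum>b<2^n. g 0 a * (\<Prod>k<n. g (Suc k) (qbit n b k)))"
    by (intro sum.cong refl) (simp only: prod.lessThan_Suc_shift, simp add: qbit_0 qbit_Suc)
  also have "\<dots> = (\<Sum>a<2. g 0 a * (\<Prod>k<n. g (Suc k) 0 + g (Suc k) 1))"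
    using Suc.IH[of "\<lambda>k. g (Suc k)"] by (simp only: sum_distrib_left[symmetric])
  also have "\<dots> = (g 0 0 + g 0 1) * (\<Prod>k<n. g (Suc k) 0 + g (Suc k) 1)"
    by (simp add: numeral_2_eq_2 lessThan_Suc distrib_right add.commute)
  also have "\<dots> = (\<Prod>k<Suc n. g k 0 + g k 1)"
    by (rule prod.lessThan_Suc_shift[symmetric])
  finally show ?case .
qed

lemma pauli1_hs_orth:
  "x < 4 \<Longrightarrow> y < 4 \<Longrightarrow>
   (\<Sum>a<2. \<Sum>b<2. cnj (pauli1 x $$ (a, b)) * pauli1 y $$ (a, b)) = (if x = y then 2 else 0)"
  by (simp add: numeral_2_eq_2 lessThan_Suc)
    (auto simp: pauli1_def mat_of_rows_list_def less_Suc_eq numeral_eq_Suc)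

lemma pauli_string_hs_orth:
  assumes x: "x \<in> pauli_idx n" and y: "y \<in> pauli_idx n"
  shows "(\<Sum>i<2^n. \<Sum>j<2^n. cnj (pauli_string n x $$ (i, j)) * pauli_string n y $$ (i, j))
     = (if x = y then 2^n else 0)"
proof -
  define F where "F k a b = cnj (pauli1 (x ! k) $$ (a, b)) * pauli1 (y ! k) $$ (a, b)" for k a b
  have xy: "k < n \<Longrightarrow> x ! k < 4 \<and> y ! k < 4" for k
    using x y unfolding pauli_idx_def by (auto simp: subset_iff)
  have "(\<Sum>i<2^n. \<Sum>j<2^n. cnj (pauli_string n x $$ (i, j)) * pauli_string n y $$ (i, j))
      = (\<Sum>i<2^n. \<Sum>j<2^n. \<Prod>k<n. F k (qbit n i k) (qbit n j k))"
    by (intro sum.cong refl) (simp add: pauli_string_def F_def cnj_prod prod.distrib)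
  also have "\<dots> = (\<Sum>i<2^n. \<Prod>k<n. F k (qbit n i k) 0 + F k (qbit n i k) 1)"
    by (intro sum.cong refl sum_qbit_prod)
  also have "\<dots> = (\<Prod>k<n. (F k 0 0 + F k 0 1) + (F k 1 0 + F k 1 1))"
    by (rule sum_qbit_prod[where g = "\<lambda>k a. F k a 0 + F k a 1"])
  also have "\<dots> = (\<Prod>k<n. if x ! k = y ! k then 2 else 0)"
    using pauli1_hs_orth xy
    by (intro prod.cong refl) (simp add: F_def numeral_2_eq_2 lessThan_Suc ac_simps)
  also have "\<dots> = (if x = y then 2^n else 0)"
  proof (cases "x = y")
    case False
    have "length x = n" "length y = n" using x y unfolding pauli_idx_def by auto
    then obtain k where "k < n" "x ! k \<noteq> y ! k" using False nth_equalityI by metis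
    then have "(\<Prod>k<n. if x ! k = y ! k then 2 else 0) = (0::complex)" by (intro prod_zero) auto
    then show ?thesis using False by simp
  qed simp
  finally show ?thesis .
qed

text \<open>Row-major vectorisation: the row index becomes the system index and the column index the
  ancilla index, so that \<^term>\<open>tensor_id n\<close> acts by left multiplication.\<close>
definition vec_of_mat :: "nat \<Rightarrow> complex mat \<Rightarrow> complex vec" where
  "vec_of_mat n A = vec (2^n * 2^n) (\<lambda>w. A $$ (w div 2^n, w mod 2^n))"

lemma vec_of_mat_carrier[simp]: "vec_of_mat n A \<in> carrier_vec (2^n * 2^n)"
  and dim_vec_of_mat[simp]: "dim_vec (vec_of_mat n A) = 2^n * 2^n"
  by (simp_all add: vec_of_mat_def)

lemma sum_pairs_div_mod: "(\<Sum>w<2^n * 2^n. h (w div 2^n) (w mod 2^n)) = (\<Sum>i<(2::nat)^n. \<Sum>j<(2::nat)^n. h i j)"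
  by (subst sum_lessThan_mult_split) simp

lemma cinner_vec_of_mat:
  "cinner (vec_of_mat n A) (vec_of_mat n B) = (\<Sum>i<2^n. \<Sum>j<2^n. cnj (A $$ (i, j)) * B $$ (i, j))"
  unfolding cinner_def vec_of_mat_def
  using sum_pairs_div_mod[where h = "\<lambda>i j. cnj (A $$ (i, j)) * B $$ (i, j)"] by simp

lemma anc_block_vec_of_mat:
  "A \<in> carrier_mat (2^n) (2^n) \<Longrightarrow> f < 2^n \<Longrightarrow> anc_block (2^n) n f (vec_of_mat n A) = col A f"
  by (intro eq_vecI) (auto simp: vec_of_mat_def mult_add_less)

lemma tensor_id_mult_vec_of_mat:
  assumes A: "A \<in> carrier_mat (2^n) (2^n)" and B: "B \<in> carrier_mat (2^n) (2^n)"
  shows "tensor_id n A *\<^sub>v vec_of_mat n B = vec_of_mat n (A * B)"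
proof (rule anc_block_eqI[of _ "2^n" n])
  fix f :: nat assume f: "f < 2^n"
  then show "anc_block (2^n) n f (tensor_id n A *\<^sub>v vec_of_mat n B) = anc_block (2^n) n f (vec_of_mat n (A * B))"
    using A B anc_block_tensor_id[OF A vec_of_mat_carrier f] anc_block_vec_of_mat[OF B f]
      anc_block_vec_of_mat[OF mult_carrier_mat[OF A B] f] col_mult2[OF A B f]
    by simp
qed (use mult_mat_vec_carrier[OF tensor_id_carrier[OF A] vec_of_mat_carrier] in simp_all)

definition inv_sqrt_dim :: "nat \<Rightarrow> complex" where
  "inv_sqrt_dim n = of_real (1 / sqrt (2^n))"

lemma cnj_inv_sqrt_dim[simp]: "cnj (inv_sqrt_dim n) = inv_sqrt_dim n"
  by (simp add: inv_sqrt_dim_def)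

lemma inv_sqrt_dim_mult_self: "inv_sqrt_dim n * inv_sqrt_dim n = 1 / 2^n"
proof -
  have "(1 / sqrt (2^n)) * (1 / sqrt (2^n)) = (1 / 2^n :: real)" by simp
  then show ?thesis unfolding inv_sqrt_dim_def by (metis of_real_divide of_real_mult of_real_numeral of_real_power of_real_1)
qed

definition pauli_vec :: "nat \<Rightarrow> nat list \<Rightarrow> complex vec" where
  "pauli_vec n x = inv_sqrt_dim n \<cdot>\<^sub>v vec_of_mat n (pauli_string n x)"

definition max_entangled :: "nat \<Rightarrow> complex vec" where
  "max_entangled n = inv_sqrt_dim n \<cdot>\<^sub>v vec_of_mat n (1\<^sub>m (2^n))"

definition choi_state :: "nat \<Rightarrow> complex mat \<Rightarrow> complex vec" where
  "choi_state n U = tensor_id n U *\<^sub>v max_entangled n"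

lemma pauli_vec_carrier[simp]: "pauli_vec n x \<in> carrier_vec (2^n * 2^n)"
  and max_entangled_carrier[simp]: "max_entangled n \<in> carrier_vec (2^n * 2^n)"
  by (simp_all add: pauli_vec_def max_entangled_def)

lemma cinner_pauli_vec:
  "x \<in> pauli_idx n \<Longrightarrow> y \<in> pauli_idx n \<Longrightarrow> cinner (pauli_vec n x) (pauli_vec n y) = (if x = y then 1 else 0)"
  by (simp add: pauli_vec_def cinner_smult_left cinner_smult_right cinner_vec_of_mat
      pauli_string_hs_orth mult.assoc[symmetric] inv_sqrt_dim_mult_self)

lemma sq_norm_max_entangled: "sq_norm_vec (max_entangled n) = 1"
proof -
  have "of_real (sq_norm_vec (max_entangled n)) = (1 / 2^n) * (\<Sum>i<2^n. \<Sum>j<(2::nat)^n. if i = j then 1 else (0::complex))"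
    by (simp add: cinner_self[symmetric] max_entangled_def cinner_smult_left cinner_smult_right
        cinner_vec_of_mat mult.assoc[symmetric] inv_sqrt_dim_mult_self if_distrib cong: if_cong)
  then show ?thesis by simp
qed

lemma max_entangled_0: "max_entangled n $ 0 = inv_sqrt_dim n"
  by (simp add: max_entangled_def vec_of_mat_def)

lemma choi_state_eq: "U \<in> carrier_mat (2^n) (2^n) \<Longrightarrow> choi_state n U = inv_sqrt_dim n \<cdot>\<^sub>v vec_of_mat n U"
  by (simp add: choi_state_def max_entangled_def mult_mat_vec[of _ "2^n * 2^n" "2^n * 2^n"]
      tensor_id_mult_vec_of_mat)

lemma pauli_coeff_eq_cinner:
  "U \<in> carrier_mat (2^n) (2^n) \<Longrightarrow> pauli_coeff n U x = cinner (pauli_vec n x) (choi_state n U)"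
  by (simp add: choi_state_eq pauli_vec_def cinner_smult_left cinner_smult_right cinner_vec_of_mat
      pauli_coeff_def mult.assoc[symmetric] inv_sqrt_dim_mult_self)

definition span_proj :: "nat \<Rightarrow> ('a \<Rightarrow> complex vec) \<Rightarrow> 'a set \<Rightarrow> complex mat" where
  "span_proj d e X = mat d d (\<lambda>(i, j). \<Sum>x\<in>X. e x $ i * cnj (e x $ j))"

context
  fixes d :: nat and e :: "'a \<Rightarrow> complex vec" and X :: "'a set"
  assumes e_carrier: "\<And>x. x \<in> X \<Longrightarrow> e x \<in> carrier_vec d"
begin

lemma span_proj_carrier[simp]: "span_proj d e X \<in> carrier_mat d d"
  by (simp add: span_proj_def)

lemma span_proj_mult_vec:
  assumes v: "v \<in> carrier_vec d"
  shows "span_proj d e X *\<^sub>v v = vec d (\<lambda>i. \<Sum>x\<in>X. cinner (e x) v * e x $ i)"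
proof (rule eq_vecI)
  fix i assume "i < dim_vec (vec d (\<lambda>i. \<Sum>x\<in>X. cinner (e x) v * e x $ i))"
  then have i: "i < d" by simp
  have "(span_proj d e X *\<^sub>v v) $ i = (\<Sum>j<d. span_proj d e X $$ (i, j) * v $ j)"
    by (rule index_mult_mat_vec_sum[OF span_proj_carrier v i])
  also have "\<dots> = (\<Sum>j<d. (\<Sum>x\<in>X. e x $ i * cnj (e x $ j)) * v $ j)"
    using i by (simp add: span_proj_def)
  also have "\<dots> = (\<Sum>x\<in>X. cinner (e x) v * e x $ i)"
    using v unfolding cinner_def
    by (simp add: sum_distrib_right sum_distrib_left sum.swap[of _ X] ac_simps)
  finally show "(span_proj d e X *\<^sub>v v) $ i = vec d (\<lambda>i. \<Sum>x\<in>X. cinner (e x) v * e x $ i) $ i"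
    using i by simp
qed (use v in \<open>simp add: span_proj_def\<close>)

lemma cinner_span_proj:
  assumes u: "u \<in> carrier_vec d" and v: "v \<in> carrier_vec d"
  shows "cinner u (span_proj d e X *\<^sub>v v) = (\<Sum>x\<in>X. cinner (e x) v * cinner u (e x))"
proof -
  have "cinner u (span_proj d e X *\<^sub>v v) = (\<Sum>x\<in>X. \<Sum>i<d. cinner (e x) v * (cnj (u $ i) * e x $ i))"
    unfolding span_proj_mult_vec[OF v] cinner_def[of u]
    by (simp add: sum_distrib_left sum.swap[of _ X] mult.left_commute)
  also have "\<dots> = (\<Sum>x\<in>X. cinner (e x) v * cinner u (e x))"
  proof (intro sum.cong refl)
    fix x assume "x \<in> X"
    then have "dim_vec (e x) = d" using e_carrier by (simp add: carrier_vecD)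
    then show "(\<Sum>i<d. cinner (e x) v * (cnj (u $ i) * e x $ i)) = cinner (e x) v * cinner u (e x)"
      by (simp add: cinner_def[of u] sum_distrib_left)
  qed
  finally show ?thesis .
qed

lemma cinner_span_proj_self:
  assumes v: "v \<in> carrier_vec d"
  shows "cinner v (span_proj d e X *\<^sub>v v) = of_real (\<Sum>x\<in>X. (cmod (cinner (e x) v))\<^sup>2)"
  unfolding cinner_span_proj[OF v v] of_real_sum
proof (intro sum.cong refl)
  fix x assume "x \<in> X"
  then have "cinner v (e x) = cnj (cinner (e x) v)" using e_carrier v by (simp add: cinner_commute)
  then show "cinner (e x) v * cinner v (e x) = of_real ((cmod (cinner (e x) v))\<^sup>2)"
    by (simp only: complex_norm_square)
qed

lemma proj_mat_span_proj:
  assumes fin: "finite X"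
    and orth: "\<And>x y. x \<in> X \<Longrightarrow> y \<in> X \<Longrightarrow> cinner (e x) (e y) = (if x = y then 1 else 0)"
  shows "proj_mat d (span_proj d e X)"
proof (rule proj_matI)
  show "adj (span_proj d e X) = span_proj d e X"
    by (intro eq_matI) (auto simp: span_proj_def cnj_sum mult.commute)
  fix v :: "complex vec" assume v: "v \<in> carrier_vec d"
  have "cinner (e y) (span_proj d e X *\<^sub>v v) = cinner (e y) v" if y: "y \<in> X" for y
  proof -
    have "cinner (e y) (span_proj d e X *\<^sub>v v) = (\<Sum>x\<in>X. if x = y then cinner (e x) v else 0)"
      unfolding cinner_span_proj[OF e_carrier[OF y] v] using y
      by (intro sum.cong refl) (simp add: cinner_commute[of "e y"] e_carrier orth)
    then show ?thesis using y fin by simp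
  qed
  then show "span_proj d e X *\<^sub>v (span_proj d e X *\<^sub>v v) = span_proj d e X *\<^sub>v v"
    using v by (simp add: span_proj_mult_vec)
qed simp

end

lemma finite_pauli_idx: "finite (pauli_idx n)"
proof -
  have "pauli_idx n = {xs. set xs \<subseteq> {0..<4} \<and> length xs = n}" unfolding pauli_idx_def by auto
  then show ?thesis using finite_lists_length_eq[of "{0..<4::nat}" n] by simp
qed

definition pauli_proj :: "nat \<Rightarrow> nat set \<Rightarrow> complex mat" where
  "pauli_proj n S = span_proj (2^n * 2^n) (pauli_vec n) {x \<in> pauli_idx n. supp x \<inter> S \<noteq> {}}"

lemma proj_mat_pauli_proj: "proj_mat (2^n * 2^n) (pauli_proj n S)"
  unfolding pauli_proj_def by (rule proj_mat_span_proj) (simp_all add: cinner_pauli_vec finite_pauli_idx)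

lemma influence_eq_cinner:
  assumes U: "U \<in> carrier_mat (2^n) (2^n)"
  shows "of_real (influence n S U) = cinner (choi_state n U) (pauli_proj n S *\<^sub>v choi_state n U)"
proof -
  have "choi_state n U \<in> carrier_vec (2^n * 2^n)"
    unfolding choi_state_def using mult_mat_vec_carrier[OF tensor_id_carrier[OF U] max_entangled_carrier] .
  then show ?thesis
    unfolding pauli_proj_def influence_def
    by (simp add: cinner_span_proj_self pauli_coeff_eq_cinner[OF U])
qed

section \<open>Chebyshev polynomials\<close>

text \<open>\<open>chebyshev t m = (T\<^sub>m t, U\<^sub>m\<^sub>-\<^sub>1 t)\<close>, read off from
  \<open>(t + \<surd>(t\<^sup>2 - 1))\<^sup>m = T\<^sub>m t + U\<^sub>m\<^sub>-\<^sub>1 t \<cdot> \<surd>(t\<^sup>2 - 1)\<close>.\<close>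
fun chebyshev :: "real \<Rightarrow> nat \<Rightarrow> real \<times> real" where
  "chebyshev t 0 = (1, 0)"
| "chebyshev t (Suc m) =
    (t * fst (chebyshev t m) + (t\<^sup>2 - 1) * snd (chebyshev t m), fst (chebyshev t m) + t * snd (chebyshev t m))"

lemma chebyshev_add:
  "chebyshev t (a + b) =
    (fst (chebyshev t a) * fst (chebyshev t b) + (t\<^sup>2 - 1) * snd (chebyshev t a) * snd (chebyshev t b),
     fst (chebyshev t a) * snd (chebyshev t b) + snd (chebyshev t a) * fst (chebyshev t b))"
  by (induction a) (simp_all add: algebra_simps power2_eq_square)

lemma chebyshev_pell: "(fst (chebyshev t m))\<^sup>2 - (t\<^sup>2 - 1) * (snd (chebyshev t m))\<^sup>2 = 1"
  by (induction m) (simp_all add: algebra_simps power2_eq_square)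

lemma chebyshev_double: "fst (chebyshev t (m + m)) = 2 * (fst (chebyshev t m))\<^sup>2 - 1"
  using chebyshev_pell[of t m] by (simp add: chebyshev_add power2_eq_square algebra_simps)

lemma not_power_of_2_between:
  assumes "2^j < k" "k < (2::nat)^Suc j" shows "\<nexists>i. k = 2^i"
proof
  assume "\<exists>i. k = 2^i"
  then obtain i where k: "k = 2^i" by blast
  have "j < i" using assms(1) unfolding k by (rule power_less_imp_less_exp[rotated]) simp
  moreover have "i < Suc j" using assms(2) unfolding k by (rule power_less_imp_less_exp[rotated]) simp
  ultimately show False by simp
qed

fun double_iter :: "real \<Rightarrow> nat \<Rightarrow> real" where
  "double_iter t 0 = t"
| "double_iter t (Suc j) = 2 * (double_iter t j)\<^sup>2 - 1"

lemma fst_chebyshev_pow2: "fst (chebyshev t (2^j)) = double_iter t j"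
proof (induction j)
  case (Suc j)
  have "(2::nat)^Suc j = 2^j + 2^j" by simp
  then show ?case using Suc by (simp only: chebyshev_double double_iter.simps)
qed simp

text \<open>The double-angle formula \<open>sin 2\<^sup>J\<theta> = 2\<^sup>J sin \<theta> \<Prod>\<^sub>j\<^sub><\<^sub>J cos 2\<^sup>j\<theta>\<close> for \<open>t = cos \<theta>\<close>, squared.\<close>
lemma prod_double_iter:
  "(\<Prod>j<J. (double_iter t j)\<^sup>2) * 4^J * (1 - t\<^sup>2) = 1 - (double_iter t J)\<^sup>2"
proof (induction J)
  case (Suc J)
  have "(\<Prod>j<Suc J. (double_iter t j)\<^sup>2) * 4^Suc J * (1 - t\<^sup>2)
      = ((\<Prod>j<J. (double_iter t j)\<^sup>2) * 4^J * (1 - t\<^sup>2)) * (4 * (double_iter t J)\<^sup>2)"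
    by (simp add: algebra_simps)
  also have "\<dots> = (1 - (double_iter t J)\<^sup>2) * (4 * (double_iter t J)\<^sup>2)"
    using Suc by simp
  also have "\<dots> = 1 - (double_iter t (Suc J))\<^sup>2"
    by (simp add: algebra_simps power2_eq_square)
  finally show ?case .
qed simp

lemma double_iter_sq: "t\<^sup>2 = 1 \<Longrightarrow> (double_iter t j)\<^sup>2 = 1"
  by (induction j) simp_all

section \<open>Amplitude amplification\<close>

locale amplitude_amplification =
  fixes d :: nat and V :: "complex mat" and \<phi> :: "complex vec" and P :: "complex mat"
  assumes V: "unitary_mat d V" and \<phi>: "\<phi> \<in> carrier_vec d" and norm_\<phi>: "sq_norm_vec \<phi> = 1"
    and P: "proj_mat d P"
begin

abbreviation Q where "Q \<equiv> 1\<^sub>m d - P"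

definition "s = V *\<^sub>v \<phi>"
definition "good = P *\<^sub>v s"
definition "bad = s - good"
definition "lam = sq_norm_vec good"
definition "grover = V * householder \<phi> * adj V * (1\<^sub>m d - 2 \<cdot>\<^sub>m P)"

lemma V_carrier: "V \<in> carrier_mat d d" using unitary_mat_carrier[OF V] .
lemma P_carrier: "P \<in> carrier_mat d d" using proj_mat_carrier[OF P] .
lemma Q_carrier: "Q \<in> carrier_mat d d" using P_carrier by (simp add: minus_carrier_mat)

lemma s_carrier[simp]: "s \<in> carrier_vec d" and good_carrier[simp]: "good \<in> carrier_vec d"
  and bad_carrier[simp]: "bad \<in> carrier_vec d"
  using V_carrier P_carrier \<phi> by (simp_all add: s_def good_def bad_def)

lemma grover_carrier: "grover \<in> carrier_mat d d"
  unfolding grover_def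
  by (intro mult_carrier_mat[of _ d d] V_carrier householder_carrier[OF \<phi>] adj_carrier minus_carrier_mat
      smult_carrier_mat P_carrier)

lemma dim_s[simp]: "dim_vec s = d" and dim_good[simp]: "dim_vec good = d" and dim_bad[simp]: "dim_vec bad = d"
  by (rule carrier_vecD, simp)+

lemma s_eq: "s = good + bad"
  unfolding bad_def by (intro eq_vecI) simp_all

lemma P_good: "P *\<^sub>v good = good"
  unfolding good_def using proj_mat_idem_vec[OF P] by simp

lemma P_bad: "P *\<^sub>v bad = 0\<^sub>v d"
  unfolding bad_def using P_carrier P_good by (simp add: mult_minus_distrib_mat_vec[OF P_carrier] good_def)

lemma cinner_s_good: "cinner s good = of_real lam"
proof -
  have "cinner s good = cinner s (P *\<^sub>v good)" by (simp add: P_good)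
  also have "\<dots> = cinner good good"
    unfolding good_def using proj_mat_cinner[OF P s_carrier mult_mat_vec_carrier[OF P_carrier s_carrier]]
    by (simp add: proj_mat_idem_vec[OF P])
  finally show ?thesis by (simp add: cinner_self lam_def)
qed

lemma cinner_s_bad: "cinner s bad = 1 - of_real lam"
proof -
  have "cinner s s = 1" using sq_norm_unitary[OF V \<phi>] norm_\<phi> by (simp add: cinner_self s_def)
  then show ?thesis unfolding bad_def by (simp add: cinner_diff_right[of _ d] cinner_s_good)
qed

lemma sq_norm_bad: "sq_norm_vec bad = 1 - lam"
proof -
  have "cinner good bad = cinner s (P *\<^sub>v bad)"
    unfolding good_def using proj_mat_cinner[OF P] by simp
  then have "cinner good bad = 0" by (simp add: P_bad cinner_zero_right)
  then have "of_real (sq_norm_vec bad) = cinner s bad"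
    unfolding cinner_self[symmetric] by (subst (1) bad_def) (simp add: cinner_diff_left[of _ d])
  then have "complex_of_real (sq_norm_vec bad) = of_real (1 - lam)" using cinner_s_bad by simp
  then show ?thesis by (simp only: of_real_eq_iff)
qed

lemma grover_mult_vec_expand:
  assumes v: "v \<in> carrier_vec d"
  shows "grover *\<^sub>v v = V *\<^sub>v (householder \<phi> *\<^sub>v (adj V *\<^sub>v ((1\<^sub>m d - 2 \<cdot>\<^sub>m P) *\<^sub>v v)))"
proof -
  have R: "1\<^sub>m d - 2 \<cdot>\<^sub>m P \<in> carrier_mat d d" using P_carrier by (simp add: minus_carrier_mat)
  have w: "(1\<^sub>m d - 2 \<cdot>\<^sub>m P) *\<^sub>v v \<in> carrier_vec d" using mult_mat_vec_carrier[OF R v] .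
  have H: "householder \<phi> \<in> carrier_mat d d" using \<phi> by simp
  have VH: "V * householder \<phi> \<in> carrier_mat d d" using V_carrier H by simp
  have VHV: "V * householder \<phi> * adj V \<in> carrier_mat d d" using VH V_carrier by simp
  show ?thesis
    unfolding grover_def assoc_mult_mat_vec[OF VHV R v]
    using assoc_mult_mat_vec[OF VH adj_carrier[OF V_carrier] w]
      assoc_mult_mat_vec[OF V_carrier H mult_mat_vec_carrier[OF adj_carrier[OF V_carrier] w]] by simp
qed

lemma grover_mult_vec:
  assumes v: "v \<in> carrier_vec d"
  defines "w \<equiv> (1\<^sub>m d - 2 \<cdot>\<^sub>m P) *\<^sub>v v"
  shows "grover *\<^sub>v v = w - (2 * cinner s w) \<cdot>\<^sub>v s"
proof -
  have R: "1\<^sub>m d - 2 \<cdot>\<^sub>m P \<in> carrier_mat d d" using P_carrier by (simp add: minus_carrier_mat)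
  have w: "w \<in> carrier_vec d" unfolding w_def using mult_mat_vec_carrier[OF R v] .
  have Vw: "adj V *\<^sub>v w \<in> carrier_vec d" using mult_mat_vec_carrier[OF adj_carrier[OF V_carrier] w] .
  have "grover *\<^sub>v v = V *\<^sub>v (householder \<phi> *\<^sub>v (adj V *\<^sub>v w))"
    unfolding w_def by (rule grover_mult_vec_expand[OF v])
  also have "\<dots> = V *\<^sub>v (adj V *\<^sub>v w) - (2 * cinner \<phi> (adj V *\<^sub>v w)) \<cdot>\<^sub>v (V *\<^sub>v \<phi>)"
    using V_carrier \<phi> Vw norm_\<phi>
    by (simp add: householder_mult_vec[OF \<phi> Vw] mult_minus_distrib_mat_vec[of _ d d] mult_mat_vec[of _ d d])
  also have "V *\<^sub>v (adj V *\<^sub>v w) = w"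
    using unitary_adj_mult_vec[OF unitary_mat_adj[OF V] w] by simp
  also have "cinner \<phi> (adj V *\<^sub>v w) = cinner s w"
    unfolding s_def using cinner_adj[OF V_carrier \<phi> w] by simp
  finally show ?thesis unfolding s_def .
qed

lemma grover_good: "grover *\<^sub>v good = of_real (2 * lam - 1) \<cdot>\<^sub>v good + of_real (2 * lam) \<cdot>\<^sub>v bad"
proof -
  have "(1\<^sub>m d - 2 \<cdot>\<^sub>m P) *\<^sub>v good = - good"
    using P_carrier by (intro eq_vecI) (simp_all add: reflection_mult_vec P_good)
  then have "grover *\<^sub>v good = - good + (2 * of_real lam) \<cdot>\<^sub>v (good + bad)"
    using cinner_s_good s_eq[symmetric]
    by (intro eq_vecI) (simp_all add: grover_mult_vec cinner_uminus_right)
  then show ?thesis by (intro eq_vecI) (simp_all add: algebra_simps)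
qed

lemma grover_bad: "grover *\<^sub>v bad = of_real (- 2 * (1 - lam)) \<cdot>\<^sub>v good + of_real (2 * lam - 1) \<cdot>\<^sub>v bad"
proof -
  have "(1\<^sub>m d - 2 \<cdot>\<^sub>m P) *\<^sub>v bad = bad"
    using P_carrier by (intro eq_vecI) (simp_all add: reflection_mult_vec P_bad)
  then have "grover *\<^sub>v bad = bad - (2 * (1 - of_real lam)) \<cdot>\<^sub>v (good + bad)"
    using cinner_s_bad s_eq[symmetric] by (simp add: grover_mult_vec)
  then show ?thesis by (intro eq_vecI) (simp_all add: algebra_simps)
qed

lemma grover_comb:
  "grover *\<^sub>v (a \<cdot>\<^sub>v good + c \<cdot>\<^sub>v bad) =
    (of_real (2 * lam - 1) * a - of_real (2 * (1 - lam)) * c) \<cdot>\<^sub>v good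
    + (of_real (2 * lam) * a + of_real (2 * lam - 1) * c) \<cdot>\<^sub>v bad"
proof -
  have "grover *\<^sub>v (a \<cdot>\<^sub>v good + c \<cdot>\<^sub>v bad) = a \<cdot>\<^sub>v (grover *\<^sub>v good) + c \<cdot>\<^sub>v (grover *\<^sub>v bad)"
    using grover_carrier by (simp add: mult_add_distrib_mat_vec[of _ d d] mult_mat_vec[of _ d d])
  then show ?thesis unfolding grover_good grover_bad by (intro eq_vecI) (simp_all add: algebra_simps)
qed

text \<open>On the plane spanned by \<^term>\<open>good\<close> and \<^term>\<open>bad\<close> the Grover iterate is a rotation with
  cosine \<^term>\<open>2 * lam - 1\<close>; its powers are given by Chebyshev polynomials.\<close>
lemma grover_iter_bad:
  "((\<lambda>v. grover *\<^sub>v v) ^^ m) (c \<cdot>\<^sub>v bad) =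
    (c * of_real (- 2 * (1 - lam) * snd (chebyshev (2 * lam - 1) m))) \<cdot>\<^sub>v good
    + (c * of_real (fst (chebyshev (2 * lam - 1) m))) \<cdot>\<^sub>v bad"
proof (induction m)
  case 0
  show ?case by (intro eq_vecI) simp_all
next
  case (Suc m)
  have "(2 * lam - 1)\<^sup>2 - 1 = - 4 * lam * (1 - lam)" by (simp add: algebra_simps power2_eq_square)
  then show ?case
    using Suc by (simp add: grover_comb) (simp add: algebra_simps)
qed

text \<open>Before the Grover steps numbered by powers of two the state is projected onto the unmarked
  subspace; in the tester this projection is the coherent measurement performed by
  \<^const>\<open>flag_gate\<close>.\<close>
primrec amp_seq :: "nat \<Rightarrow> complex vec" where
  "amp_seq 0 = s"
| "amp_seq (Suc i) = grover *\<^sub>v (if \<exists>j. Suc i = 2^j then Q *\<^sub>v amp_seq i else amp_seq i)"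

definition residual :: "nat \<Rightarrow> complex vec" where
  "residual j = Q *\<^sub>v amp_seq (2^j - 1)"

lemma amp_seq_carrier: "amp_seq i \<in> carrier_vec d"
  by (induction i) (use grover_carrier Q_carrier in auto)

lemma amp_seq_block:
  assumes "1 \<le> m" "m \<le> 2^j"
  shows "amp_seq (2^j - 1 + m) = ((\<lambda>v. grover *\<^sub>v v) ^^ m) (residual j)"
  using assms
proof (induction m)
  case (Suc m)
  have pj: "(1::nat) \<le> 2^j" by simp
  show ?case
  proof (cases "m = 0")
    case True
    have "Suc (2^j - 1) = 2^j" using pj by simp
    then have "\<exists>i. Suc (2^j - 1) = 2^i" by blast
    then have "amp_seq (Suc (2^j - 1)) = grover *\<^sub>v residual j"
      by (simp only: amp_seq.simps if_True residual_def)
    moreover have "2^j - 1 + Suc m = Suc (2^j - 1)" using True pj by simp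
    ultimately show ?thesis using True by simp
  next
    case False
    have "2^j < Suc (2^j - 1 + m)" "Suc (2^j - 1 + m) < 2^Suc j" using False Suc.prems pj by simp_all
    then have "\<not> (\<exists>i. Suc (2^j - 1 + m) = 2^i)"
      using not_power_of_2_between by blast
    then have "amp_seq (Suc (2^j - 1 + m)) = grover *\<^sub>v amp_seq (2^j - 1 + m)"
      by (simp only: amp_seq.simps if_False)
    moreover have "amp_seq (2^j - 1 + m) = ((\<lambda>v. grover *\<^sub>v v) ^^ m) (residual j)"
      using Suc False by simp
    moreover have "2^j - 1 + Suc m = Suc (2^j - 1 + m)" using pj by simp
    ultimately show ?thesis by (simp only: funpow.simps o_apply)
  qed
qed simp

lemma compl_mult_comb: "Q *\<^sub>v (a \<cdot>\<^sub>v good + c \<cdot>\<^sub>v bad) = c \<cdot>\<^sub>v bad"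
  using P_carrier by (intro eq_vecI)
    (simp_all add: compl_mult_vec mult_add_distrib_mat_vec[of _ d d] mult_mat_vec[of _ d d] P_good P_bad)

lemma residual_eq: "residual j = of_real (\<Prod>i<j. double_iter (2 * lam - 1) i) \<cdot>\<^sub>v bad"
proof (induction j)
  case 0
  show ?case using compl_mult_comb[of 1 1] s_eq by (simp add: residual_def)
next
  case (Suc j)
  have "(2::nat)^Suc j - 1 = 2^j - 1 + 2^j" by simp
  then have "amp_seq (2^Suc j - 1) = ((\<lambda>v. grover *\<^sub>v v) ^^ 2^j) (residual j)"
    using amp_seq_block[of "2^j" j] by simp
  then show ?case
    unfolding residual_def[of "Suc j"] Suc grover_iter_bad fst_chebyshev_pow2 by (simp add: compl_mult_comb)
qed

lemma sq_norm_residual: "sq_norm_vec (residual j) = (\<Prod>i<j. (double_iter (2 * lam - 1) i)\<^sup>2) * (1 - lam)"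
  unfolding residual_eq sq_norm_vec_smult sq_norm_bad norm_of_real power2_abs prod_power_distrib ..

lemma sq_norm_residual_bound: "sq_norm_vec (residual (Suc J)) * 4^(J + 2) * lam \<le> 1"
proof -
  have "sq_norm_vec (residual (Suc J)) * 4^(J + 2) * lam
      = (\<Prod>i<Suc J. (double_iter (2 * lam - 1) i)\<^sup>2) * 4^Suc J * (1 - (2 * lam - 1)\<^sup>2)"
    by (simp add: sq_norm_residual algebra_simps power2_eq_square)
  also have "\<dots> \<le> 1" unfolding prod_double_iter by simp
  finally show ?thesis .
qed

lemma sq_norm_residual_lam_0: "lam = 0 \<Longrightarrow> sq_norm_vec (residual j) = 1"
  by (simp add: sq_norm_residual double_iter_sq)

end

section \<open>The influence tester\<close>

lemma unitary_query_op:
  "unitary_mat (2^n) U \<Longrightarrow> unitary_mat (alg_dim n A) (query_op A U t)"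
  unfolding query_op_def alg_dim_def by (simp add: unitary_tensor_id unitary_mat_adj)

lemma alg_state_unit:
  assumes A: "valid_alg n A" and U: "unitary_mat (2^n) U" and t: "t \<le> nq A"
  shows "alg_state n A U t \<in> carrier_vec (alg_dim n A) \<and> sq_norm_vec (alg_state n A U t) = 1"
  using t
proof (induction t)
  case 0
  have G: "unitary_mat (alg_dim n A) (gate A 0)" using A unfolding valid_alg_def by simp
  have "unit_vec (alg_dim n A) 0 \<in> carrier_vec (alg_dim n A)" by simp
  then show ?case
    using sq_norm_unitary[OF G] sq_norm_vec_unit_vec[of 0 "alg_dim n A"]
      mult_mat_vec_carrier[OF unitary_mat_carrier[OF G]]
    by (simp add: alg_dim_def)
next
  case (Suc t)
  then have IH: "alg_state n A U t \<in> carrier_vec (alg_dim n A)" "sq_norm_vec (alg_state n A U t) = 1"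
    by auto
  have G: "unitary_mat (alg_dim n A) (gate A (Suc t))" using A Suc.prems unfolding valid_alg_def by simp
  have Q: "unitary_mat (alg_dim n A) (query_op A U t)" using unitary_query_op[OF U] .
  have "query_op A U t *\<^sub>v alg_state n A U t \<in> carrier_vec (alg_dim n A)"
    using mult_mat_vec_carrier[OF unitary_mat_carrier[OF Q] IH(1)] .
  then show ?case
    using IH sq_norm_unitary[OF G] sq_norm_unitary[OF Q IH(1)] mult_mat_vec_carrier[OF unitary_mat_carrier[OF G]]
    by simp
qed

text \<open>The tester: amplitude amplification with \<open>V = U \<otimes> I\<close>, initial state the maximally
  entangled state and marked subspace spanned by the Pauli strings meeting \<open>S\<close>.  After the \<open>i\<close>-th query of \<open>U\<close>
  the gate first records, if \<open>i + 1\<close> is a power of two, in flag value \<open>i + 1\<close> whether the state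
  is marked, and then reflects about the marked subspace; after each query of \<open>U\<^sup>\<dagger>\<close> it
  reflects about the maximally entangled state.  The test accepts iff some flag was raised.\<close>
locale influence_tester =
  fixes n :: nat and S :: "nat set" and J :: nat
begin

abbreviation "d \<equiv> (2::nat)^n * 2^n"
abbreviation "m \<equiv> J + 2"
abbreviation "K \<equiv> (2::nat)^Suc J - 1"
abbreviation "P \<equiv> pauli_proj n S"

definition flag_step :: "nat \<Rightarrow> complex mat" where
  "flag_step i = (if \<exists>j. i + 1 = 2^j then flag_gate d m P (i + 1) else 1\<^sub>m (d * 2^m))"

definition gate_seq :: "nat \<Rightarrow> complex mat" where
  "gate_seq t =
    (if t = 0 then tensor_id m (householder (unit_vec d 0 - max_entangled n))
     else if odd t then tensor_id m (1\<^sub>m d - 2 \<cdot>\<^sub>m P) * flag_step (t div 2)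
     else tensor_id m (householder (max_entangled n)))"

definition alg :: qalg where
  "alg = \<lparr>anc = n + m, nq = 2 * K + 1, gate = gate_seq, inv_q = odd, accept = {l. l mod 2^m \<noteq> 0}\<rparr>"

lemma alg_dim_alg: "alg_dim n alg = d * 2^m"
  by (simp add: alg_dim_def alg_def power_add mult.assoc)

lemma flag_index_less: "i \<le> K \<Longrightarrow> i + 1 < 2^m"
proof -
  have "K + 1 = 2^Suc J" by simp
  moreover have "(2::nat)^Suc J < 2^m" by simp
  ultimately show "i \<le> K \<Longrightarrow> i + 1 < 2^m" by linarith
qed

lemma unitary_flag_step: "i \<le> K \<Longrightarrow> unitary_mat (d * 2^m) (flag_step i)"
  unfolding flag_step_def
  using unitary_flag_gate[OF proj_mat_pauli_proj flag_index_less] unitary_mat_one by presburger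

lemma anc_block_flag_step:
  assumes i: "i \<le> K" and v: "v \<in> carrier_vec (d * 2^m)" and f: "f < 2^m"
  shows "anc_block d m f (flag_step i *\<^sub>v v) =
    (if \<exists>j. i + 1 = 2^j
     then P *\<^sub>v anc_block d m (Transposition.transpose 0 (i + 1) f) v + (1\<^sub>m d - P) *\<^sub>v anc_block d m f v
     else anc_block d m f v)"
  using anc_block_flag_gate[OF proj_mat_pauli_proj flag_index_less[OF i] v f] v by (simp add: flag_step_def)

lemma unitary_gate_seq:
  assumes t: "t \<le> 2 * K + 1" shows "unitary_mat (d * 2^m) (gate_seq t)"
proof -
  have P: "proj_mat d P" by (rule proj_mat_pauli_proj)
  have "t div 2 \<le> K" using t by linarith
  then have F: "unitary_mat (d * 2^m) (flag_step (t div 2))" by (rule unitary_flag_step)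
  have "unitary_mat (d * 2^m) (tensor_id m (householder v))" if "v \<in> carrier_vec d" for v
    using unitary_tensor_id[OF unitary_householder[OF that]] .
  moreover have "unitary_mat (d * 2^m) (tensor_id m (1\<^sub>m d - 2 \<cdot>\<^sub>m P))"
    using unitary_tensor_id[OF unitary_reflection[OF P]] .
  ultimately show ?thesis
    unfolding gate_seq_def using unitary_mat_mult[OF _ F] by simp
qed

lemma gate_alg: "gate alg = gate_seq" and nq_alg: "nq alg = 2 * K + 1"
  by (simp_all add: alg_def)

lemma valid_alg: "valid_alg n alg"
  unfolding valid_alg_def alg_dim_alg gate_alg nq_alg using unitary_gate_seq by blast

end

locale influence_tester_run = influence_tester +
  fixes U :: "complex mat"
  assumes U: "unitary_mat (2^n) U"
begin

sublocale amplitude_amplification d "tensor_id n U" "max_entangled n" P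
  using unitary_tensor_id[OF U] sq_norm_max_entangled proj_mat_pauli_proj
  by unfold_locales simp_all

lemma U_carrier: "U \<in> carrier_mat (2^n) (2^n)" using unitary_mat_carrier[OF U] .

lemma lam_eq_influence: "lam = influence n S U"
proof -
  have "s = choi_state n U" unfolding s_def choi_state_def ..
  then have "of_real lam = (of_real (influence n S U) :: complex)"
    using cinner_s_good influence_eq_cinner[OF U_carrier] by (simp add: good_def)
  then show ?thesis by (simp only: of_real_eq_iff)
qed

lemma query_op_alg:
  "query_op alg U t = tensor_id m (if odd t then adj (tensor_id n U) else tensor_id n U)"
proof -
  have "query_op alg U t = tensor_id (n + m) (if odd t then adj U else U)"
    by (simp add: query_op_def alg_def)
  also have "\<dots> = tensor_id m (tensor_id n (if odd t then adj U else U))"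
    by (rule tensor_id_add[of _ "2^n"]) (use U_carrier in simp)
  also have "tensor_id n (if odd t then adj U else U) = (if odd t then adj (tensor_id n U) else tensor_id n U)"
    using adj_tensor_id[OF U_carrier] by simp
  finally show ?thesis .
qed

lemma alg_state_carrier: "t \<le> nq alg \<Longrightarrow> alg_state n alg U t \<in> carrier_vec (d * 2^m)"
  using alg_state_unit[OF valid_alg U, of t] alg_dim_alg by simp

definition round_state :: "nat \<Rightarrow> complex vec" where
  "round_state i = tensor_id m (tensor_id n U) *\<^sub>v alg_state n alg U (2 * i)"

lemma anc_block_grover_step:
  assumes v: "v \<in> carrier_vec (d * 2^m)" and f: "f < 2^m"
  shows "anc_block d m f (tensor_id m (tensor_id n U) *\<^sub>v (tensor_id m (householder (max_entangled n)) *\<^sub>v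
      (tensor_id m (adj (tensor_id n U)) *\<^sub>v (tensor_id m (1\<^sub>m d - 2 \<cdot>\<^sub>m P) *\<^sub>v v)))) =
    grover *\<^sub>v anc_block d m f v"
proof -
  have Rc: "1\<^sub>m d - 2 \<cdot>\<^sub>m P \<in> carrier_mat d d" using P_carrier by (simp add: minus_carrier_mat)
  have Hc: "householder (max_entangled n) \<in> carrier_mat d d" by simp
  have aVc: "adj (tensor_id n U) \<in> carrier_mat d d" using adj_carrier[OF V_carrier] .
  have c1: "tensor_id m (1\<^sub>m d - 2 \<cdot>\<^sub>m P) *\<^sub>v v \<in> carrier_vec (d * 2^m)"
    using mult_mat_vec_carrier[OF tensor_id_carrier[OF Rc] v] .
  have c2: "tensor_id m (adj (tensor_id n U)) *\<^sub>v (tensor_id m (1\<^sub>m d - 2 \<cdot>\<^sub>m P) *\<^sub>v v) \<in> carrier_vec (d * 2^m)"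
    using mult_mat_vec_carrier[OF tensor_id_carrier[OF aVc] c1] .
  have c3: "tensor_id m (householder (max_entangled n)) *\<^sub>v
      (tensor_id m (adj (tensor_id n U)) *\<^sub>v (tensor_id m (1\<^sub>m d - 2 \<cdot>\<^sub>m P) *\<^sub>v v)) \<in> carrier_vec (d * 2^m)"
    using mult_mat_vec_carrier[OF tensor_id_carrier[OF Hc] c2] .
  show ?thesis
    unfolding anc_block_tensor_id[OF V_carrier c3 f] anc_block_tensor_id[OF Hc c2 f] anc_block_tensor_id[OF aVc c1 f]
      anc_block_tensor_id[OF Rc v f] grover_mult_vec_expand[OF anc_block_carrier] ..
qed

lemma round_state_carrier: "i \<le> K \<Longrightarrow> round_state i \<in> carrier_vec (d * 2^m)"
proof -
  assume "i \<le> K"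
  then have "2 * i \<le> nq alg" unfolding nq_alg by linarith
  then show ?thesis unfolding round_state_def by (rule mult_mat_vec_carrier[OF tensor_id_carrier[OF V_carrier] alg_state_carrier])
qed

lemma alg_state_odd:
  assumes "i \<le> K"
  shows "alg_state n alg U (Suc (2 * i)) = tensor_id m (1\<^sub>m d - 2 \<cdot>\<^sub>m P) *\<^sub>v (flag_step i *\<^sub>v round_state i)"
proof -
  have Rc: "1\<^sub>m d - 2 \<cdot>\<^sub>m P \<in> carrier_mat d d" using P_carrier by (simp add: minus_carrier_mat)
  have "gate alg (Suc (2 * i)) = tensor_id m (1\<^sub>m d - 2 \<cdot>\<^sub>m P) * flag_step i"
    by (simp add: gate_alg gate_seq_def)
  moreover have "query_op alg U (2 * i) *\<^sub>v alg_state n alg U (2 * i) = round_state i"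
    by (simp add: query_op_alg round_state_def)
  ultimately show ?thesis
    using assoc_mult_mat_vec[OF tensor_id_carrier[OF Rc] unitary_mat_carrier[OF unitary_flag_step[OF assms]]
        round_state_carrier[OF assms]]
    by simp
qed

lemma round_state_Suc:
  assumes "i \<le> K"
  shows "round_state (Suc i) = tensor_id m (tensor_id n U) *\<^sub>v (tensor_id m (householder (max_entangled n)) *\<^sub>v
      (tensor_id m (adj (tensor_id n U)) *\<^sub>v (tensor_id m (1\<^sub>m d - 2 \<cdot>\<^sub>m P) *\<^sub>v (flag_step i *\<^sub>v round_state i))))"
proof -
  have "gate alg (Suc (Suc (2 * i))) = tensor_id m (householder (max_entangled n))"
    by (simp add: gate_alg gate_seq_def)
  moreover have "query_op alg U (Suc (2 * i)) = tensor_id m (adj (tensor_id n U))"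
    by (simp add: query_op_alg)
  moreover have "2 * Suc i = Suc (Suc (2 * i))" by simp
  ultimately show ?thesis
    unfolding round_state_def[of "Suc i"] using alg_state_odd[OF assms] by (simp only: alg_state.simps)
qed

lemma householder_prepares_max_entangled: "householder (unit_vec d 0 - max_entangled n) *\<^sub>v unit_vec d 0 = max_entangled n"
proof (rule householder_diff_mult_vec[of _ d])
  have "cinner (max_entangled n) (unit_vec d 0) = cnj (cinner (unit_vec d 0) (max_entangled n))"
    by (simp add: cinner_commute)
  then show "cinner (unit_vec d 0) (max_entangled n) = cinner (max_entangled n) (unit_vec d 0)"
    by (simp add: cinner_unit_vec max_entangled_0)
qed (simp_all add: sq_norm_vec_unit_vec sq_norm_max_entangled)

lemma anc_block_round_state_0:
  assumes f: "f < 2^m" shows "anc_block d m f (round_state 0) = (if f = 0 then s else 0\<^sub>v d)"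
proof -
  define Prep where "Prep = householder (unit_vec d 0 - max_entangled n)"
  have Prep: "Prep \<in> carrier_mat d d" by (simp add: Prep_def)
  have e: "unit_vec (d * 2^m) 0 \<in> carrier_vec (d * 2^m)" by simp
  have "alg_state n alg U 0 = tensor_id m Prep *\<^sub>v unit_vec (d * 2^m) 0"
    by (simp add: alg_dim_alg gate_alg gate_seq_def Prep_def)
  then have "anc_block d m f (round_state 0) = tensor_id n U *\<^sub>v (Prep *\<^sub>v (if f = 0 then unit_vec d 0 else 0\<^sub>v d))"
    unfolding round_state_def
    using anc_block_tensor_id[OF V_carrier mult_mat_vec_carrier[OF tensor_id_carrier[OF Prep] e] f]
      anc_block_tensor_id[OF Prep e f] anc_block_unit_vec_0[OF f]
    by simp
  then show ?thesis
    using householder_prepares_max_entangled mult_mat_vec_zero[OF Prep] mult_mat_vec_zero[OF V_carrier]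
    by (simp add: s_def Prep_def)
qed

lemma anc_block_flag_step_invariant:
  assumes i: "i \<le> K" and v: "v \<in> carrier_vec (d * 2^m)" and x: "x \<in> carrier_vec d"
    and v0: "anc_block d m 0 v = x" and vf: "\<And>f. i < f \<Longrightarrow> f < 2^m \<Longrightarrow> anc_block d m f v = 0\<^sub>v d"
  shows "anc_block d m 0 (flag_step i *\<^sub>v v) = (if \<exists>j. Suc i = 2^j then (1\<^sub>m d - P) *\<^sub>v x else x)"
    and "\<And>f. Suc i < f \<Longrightarrow> f < 2^m \<Longrightarrow> anc_block d m f (flag_step i *\<^sub>v v) = 0\<^sub>v d"
proof -
  have pos: "0 < (2::nat)^m" by simp
  show "anc_block d m 0 (flag_step i *\<^sub>v v) = (if \<exists>j. Suc i = 2^j then (1\<^sub>m d - P) *\<^sub>v x else x)"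
    unfolding anc_block_flag_step[OF i v pos]
    using v0 vf[of "i + 1"] flag_index_less[OF i] mult_mat_vec_zero[OF P_carrier] x
      mult_mat_vec_carrier[OF Q_carrier x]
    by simp
  show "anc_block d m f (flag_step i *\<^sub>v v) = 0\<^sub>v d" if "Suc i < f" "f < 2^m" for f
    unfolding anc_block_flag_step[OF i v that(2)]
    using that vf[of f] mult_mat_vec_zero[OF P_carrier] mult_mat_vec_zero[OF Q_carrier] by simp
qed

lemma anc_block_round_state:
  "i \<le> K \<Longrightarrow> anc_block d m 0 (round_state i) = amp_seq i \<and>
    (\<forall>f. i < f \<longrightarrow> f < 2^m \<longrightarrow> anc_block d m f (round_state i) = 0\<^sub>v d)"
proof (induction i)
  case 0
  then show ?case using anc_block_round_state_0 by simp
next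
  case (Suc i)
  then have i: "i \<le> K" by simp
  have st: "round_state i \<in> carrier_vec (d * 2^m)" using round_state_carrier[OF i] .
  have "flag_step i *\<^sub>v round_state i \<in> carrier_vec (d * 2^m)"
    using mult_mat_vec_carrier[OF unitary_mat_carrier[OF unitary_flag_step[OF i]] st] .
  then have "anc_block d m f (round_state (Suc i)) = grover *\<^sub>v anc_block d m f (flag_step i *\<^sub>v round_state i)"
    if "f < 2^m" for f
    using round_state_Suc[OF i] anc_block_grover_step[OF _ that] by simp
  then show ?case
    using anc_block_flag_step_invariant[OF i st amp_seq_carrier] Suc i mult_mat_vec_zero[OF grover_carrier] by simp
qed

lemma anc_block_final_state: "anc_block d m 0 (alg_state n alg U (nq alg)) = residual (Suc J)"
proof -
  have K: "K \<le> K" ..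
  have st: "round_state K \<in> carrier_vec (d * 2^m)" using round_state_carrier[OF K] .
  have R: "1\<^sub>m d - 2 \<cdot>\<^sub>m P \<in> carrier_mat d d" using P_carrier by (simp add: minus_carrier_mat)
  have F: "flag_step K *\<^sub>v round_state K \<in> carrier_vec (d * 2^m)"
    using mult_mat_vec_carrier[OF unitary_mat_carrier[OF unitary_flag_step[OF K]] st] .
  have "\<exists>j. Suc K = 2^j" by (intro exI[of _ "Suc J"]) simp
  then have "anc_block d m 0 (flag_step K *\<^sub>v round_state K) = (1\<^sub>m d - P) *\<^sub>v amp_seq K"
    using anc_block_flag_step_invariant(1)[OF K st amp_seq_carrier] anc_block_round_state[OF K] by simp
  moreover have "(1\<^sub>m d - 2 \<cdot>\<^sub>m P) *\<^sub>v ((1\<^sub>m d - P) *\<^sub>v amp_seq K) = (1\<^sub>m d - P) *\<^sub>v amp_seq K"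
    using P_carrier proj_mult_compl[OF P amp_seq_carrier] mult_mat_vec_carrier[OF Q_carrier amp_seq_carrier]
    by (intro eq_vecI) (simp_all add: reflection_mult_vec)
  moreover have "alg_state n alg U (nq alg) = tensor_id m (1\<^sub>m d - 2 \<cdot>\<^sub>m P) *\<^sub>v (flag_step K *\<^sub>v round_state K)"
    using alg_state_odd[OF K] by (simp add: nq_alg)
  ultimately show ?thesis
    using anc_block_tensor_id[OF R F, of 0] by (simp add: residual_def)
qed

lemma prob_one_alg: "prob_one n alg U = 1 - sq_norm_vec (residual (Suc J))"
proof -
  have "alg_state n alg U (nq alg) \<in> carrier_vec (d * 2^m)"
    using alg_state_carrier by simp
  moreover have "sq_norm_vec (alg_state n alg U (nq alg)) = 1"
    using alg_state_unit[OF valid_alg U] by simp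
  moreover have "accept alg = {l. l mod 2^m \<noteq> 0}" by (simp add: alg_def)
  ultimately show ?thesis
    unfolding prob_one_def alg_dim_alg by (simp only: sq_norm_vec_anc_nonzero anc_block_final_state)
qed

lemma prob_one_ge:
  assumes "\<delta> \<le> influence n S U" and "10 \<le> 4^(J + 2) * \<delta>"
  shows "9 / 10 \<le> prob_one n alg U"
proof -
  have "sq_norm_vec (residual (Suc J)) * 10 \<le> sq_norm_vec (residual (Suc J)) * (4^(J + 2) * lam)"
    using assms lam_eq_influence sq_norm_vec_nonneg[of "residual (Suc J)"]
    by (intro mult_left_mono) (auto intro: order.trans[OF _ mult_left_mono])
  also have "\<dots> \<le> 1" using sq_norm_residual_bound by (simp add: mult.assoc)
  finally show ?thesis by (simp add: prob_one_alg)
qed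

lemma prob_one_eq_0: "influence n S U = 0 \<Longrightarrow> prob_one n alg U = 0"
  by (simp add: prob_one_alg sq_norm_residual_lam_0 lam_eq_influence)

end

context influence_tester
begin

lemma nq_alg_le:
  assumes \<delta>: "0 < \<delta>" and J: "4^(J + 2) * \<delta> \<le> 40"
  shows "real (nq alg) \<le> 7 / sqrt \<delta>"
proof -
  have "real (nq alg) \<le> 2^(J + 2)"
    unfolding nq_alg by (simp add: of_nat_diff)
  moreover have "2^(J + 2) * sqrt \<delta> \<le> 7"
  proof (rule power2_le_imp_le)
    have "((2::real)^(J + 2))\<^sup>2 = 4^(J + 2)"
      by (simp only: power_mult[symmetric] mult.commute[of _ 2]) (simp add: power_mult)
    then have "(2^(J + 2) * sqrt \<delta>)\<^sup>2 = 4^(J + 2) * \<delta>"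
      using \<delta> by (simp only: power_mult_distrib real_sqrt_pow2 less_imp_le)
    also have "\<dots> \<le> 7\<^sup>2" by (rule order.trans[OF J]) simp
    finally show "(2^(J + 2) * sqrt \<delta>)\<^sup>2 \<le> 7\<^sup>2" .
  qed simp
  ultimately have "real (nq alg) * sqrt \<delta> \<le> 7"
    by (meson \<delta> mult_right_mono order.trans real_sqrt_ge_zero less_imp_le)
  then show ?thesis using \<delta> by (simp add: pos_le_divide_eq)
qed

lemma alg_correct:
  assumes J: "10 \<le> 4^(J + 2) * \<delta>" and U: "unitary_mat (2^n) U"
  shows "(influence n S U \<ge> \<delta> \<longrightarrow> prob_one n alg U \<ge> 9 / 10) \<and> (influence n S U = 0 \<longrightarrow> prob_one n alg U = 0)"
proof -
  interpret influence_tester_run n S J U using U by unfold_locales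
  show ?thesis using prob_one_ge[OF _ J] prob_one_eq_0 by blast
qed

end

lemma exists_scale:
  assumes "0 < \<delta>" "\<delta> \<le> (1::real)"
  shows "\<exists>J. 10 \<le> 4^(J + 2) * \<delta> \<and> 4^(J + 2) * \<delta> \<le> 40"
proof -
  obtain k where "10 / \<delta> < 4^k" using real_arch_pow[of 4 "10 / \<delta>"] by auto
  then have ex: "\<exists>J. 10 \<le> 4^(J + 2) * \<delta>"
    using assms by (intro exI[of _ k]) (simp add: field_simps)
  define J where "J = (LEAST J. 10 \<le> 4^(J + 2) * \<delta>)"
  have "10 \<le> 4^(J + 2) * \<delta>" unfolding J_def using LeastI_ex[OF ex] .
  moreover have "4^(J + 2) * \<delta> \<le> 40"
  proof (cases J)
    case (Suc j)
    have "\<not> 10 \<le> 4^(j + 2) * \<delta>"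
    proof
      assume "10 \<le> 4^(j + 2) * \<delta>"
      then have "J \<le> j" unfolding J_def by (rule Least_le)
      then show False using Suc by simp
    qed
    then show ?thesis using Suc by simp
  qed (use assms in simp)
  ultimately show ?thesis by blast
qed

theorem mainTheorem8:
  shows "\<exists>C::real. C > 0 \<and>
    (\<forall>n::nat. \<forall>S. \<forall>\<delta>::real. S \<subseteq> {..<n} \<and> 0 < \<delta> \<and> \<delta> \<le> 1 \<longrightarrow>
      (\<exists>A. valid_alg n A \<and> real (nq A) \<le> C / sqrt \<delta> \<and>
        (\<forall>U. unitary_mat (2 ^ n) U \<longrightarrow>
          (influence n S U \<ge> \<delta> \<longrightarrow> prob_one n A U \<ge> 9 / 10) \<and>
          (influence n S U = 0 \<longrightarrow> prob_one n A U = 0))))"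
proof (intro exI[of _ 7] conjI allI impI)
  fix n :: nat and S :: "nat set" and \<delta> :: real
  assume "S \<subseteq> {..<n} \<and> 0 < \<delta> \<and> \<delta> \<le> 1"
  then have \<delta>: "0 < \<delta>" "\<delta> \<le> 1" by auto
  obtain J where J: "10 \<le> 4^(J + 2) * \<delta>" "4^(J + 2) * \<delta> \<le> 40" using exists_scale[OF \<delta>] by blast
  interpret influence_tester n S J .
  show "\<exists>A. valid_alg n A \<and> real (nq A) \<le> 7 / sqrt \<delta> \<and>
      (\<forall>U. unitary_mat (2 ^ n) U \<longrightarrow>
        (influence n S U \<ge> \<delta> \<longrightarrow> prob_one n A U \<ge> 9 / 10) \<and>
        (influence n S U = 0 \<longrightarrow> prob_one n A U = 0))"
    using valid_alg nq_alg_le[OF \<delta>(1) J(2)] alg_correct[OF J(1)] by blast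
qed simp

end
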